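(* Let $A\neq\mathbb{C}$ be a unital $C^*$-algebra with a faithful tracial state $\tau$. Then there exist $0<\lambda<1$ and positive elements $e,f\in A$ with $e\perp f$, $d_\tau(e)=\lambda$ and $d_\tau(f)=1-\lambda$.
   Context: $e\perp f$ means $ef=0$. For a trace $\tau$ and positive $a$, $d_\tau(a)=\lim_{n\to\infty}\tau(a^{1/n})$. *)

theory Defs
  imports "HOL-Analysis.Analysis"
begin

text \<open>A unital C*-algebra is modelled on a type 'a that is a real Banach algebra
with unit (norm 1 = 1, submultiplicative norm), together with a complex scalar
multiplication sc (extending the real one) and an involution st satisfying the
C*-identity.\<close>

definition unital_cstar_algebra ::
  "('a::{real_normed_algebra_1,banach} \<Rightarrow> 'a) \<Rightarrow> (complex \<Rightarrow> 'a \<Rightarrow> 'a) \<Rightarrow> bool" where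
  "unital_cstar_algebra st sc \<longleftrightarrow>
     (\<forall>r x. sc (complex_of_real r) x = scaleR r x) \<and>
     (\<forall>a b x. sc a (sc b x) = sc (a * b) x) \<and>
     (\<forall>a b x. sc (a + b) x = sc a x + sc b x) \<and>
     (\<forall>a x y. sc a (x + y) = sc a x + sc a y) \<and>
     (\<forall>a x y. sc a (x * y) = sc a x * y) \<and>
     (\<forall>a x y. sc a (x * y) = x * sc a y) \<and>
     (\<forall>a x. norm (sc a x) = cmod a * norm x) \<and>
     (\<forall>x. st (st x) = x) \<and>
     (\<forall>x y. st (x + y) = st x + st y) \<and>
     (\<forall>x y. st (x * y) = st y * st x) \<and>
     (\<forall>a x. st (sc a x) = sc (cnj a) (st x)) \<and>
     (\<forall>x. norm (st x * x) = (norm x)\<^sup>2)"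

definition cspectrum :: "(complex \<Rightarrow> 'a \<Rightarrow> 'a) \<Rightarrow> 'a::ring_1 \<Rightarrow> complex set" where
  "cspectrum sc a = {c. \<not> (\<exists>b. b * (a - sc c 1) = 1 \<and> (a - sc c 1) * b = 1)}"

definition cpositive :: "('a \<Rightarrow> 'a) \<Rightarrow> (complex \<Rightarrow> 'a \<Rightarrow> 'a) \<Rightarrow> 'a::ring_1 \<Rightarrow> bool" where
  "cpositive st sc a \<longleftrightarrow> st a = a \<and> cspectrum sc a \<subseteq> complex_of_real ` {0..}"

text \<open>a^(1/n) for positive a: the unique positive n-th root (what the continuous
functional calculus of t \<mapsto> t^(1/n) produces).\<close>
definition proot :: "('a \<Rightarrow> 'a) \<Rightarrow> (complex \<Rightarrow> 'a \<Rightarrow> 'a) \<Rightarrow> nat \<Rightarrow> 'a::ring_1 \<Rightarrow> 'a" where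
  "proot st sc n a = (THE b. cpositive st sc b \<and> b ^ n = a)"

definition tracial_state ::
  "('a \<Rightarrow> 'a) \<Rightarrow> (complex \<Rightarrow> 'a \<Rightarrow> 'a) \<Rightarrow> ('a::ring_1 \<Rightarrow> complex) \<Rightarrow> bool" where
  "tracial_state st sc \<tau> \<longleftrightarrow>
     (\<forall>x y. \<tau> (x + y) = \<tau> x + \<tau> y) \<and>
     (\<forall>c x. \<tau> (sc c x) = c * \<tau> x) \<and>
     (\<forall>x y. \<tau> (x * y) = \<tau> (y * x)) \<and>
     (\<forall>x. Im (\<tau> (st x * x)) = 0 \<and> Re (\<tau> (st x * x)) \<ge> 0) \<and>
     \<tau> 1 = 1"

definition faithful :: "('a \<Rightarrow> 'a) \<Rightarrow> ('a::ring_1 \<Rightarrow> complex) \<Rightarrow> bool" where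
  "faithful st \<tau> \<longleftrightarrow> (\<forall>x. \<tau> (st x * x) = 0 \<longrightarrow> x = 0)"

definition dtau_eq :: "('a \<Rightarrow> 'a) \<Rightarrow> (complex \<Rightarrow> 'a \<Rightarrow> 'a) \<Rightarrow> ('a::ring_1 \<Rightarrow> complex) \<Rightarrow> 'a \<Rightarrow> real \<Rightarrow> bool" where
  "dtau_eq st sc \<tau> a r \<longleftrightarrow> (\<lambda>n. \<tau> (proot st sc (Suc n) a)) \<longlonglongrightarrow> complex_of_real r"

end

theory Submission
  imports Defs "HOL-Computational_Algebra.Fundamental_Theorem_Algebra"
begin

(* A non-scalar A contains a non-scalar self-adjoint h, whose (real) spectrum therefore
   has two points s < t. For a cut point c \<in> (s, t) let a_c(y) = min (max (y - c) 0) 1 and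
   b_c(y) = min (max (c - y) 0) 1, and put e = a_c(h), f = b_c(h). Then e, f \<ge> 0 and ef = 0;
   d_\<tau>(e) = lim \<tau>(a_c^{1/n}(h)) > 0 because \<tau> is faithful and a_c(t) > 0, likewise d_\<tau>(f) > 0.
   The deficiency D(c) = 1 - d_\<tau>(e) - d_\<tau>(f) is \<ge> 0 and \<Sum>_{c\<in>C} D(c) \<le> 1 for every finite C,
   so D(c) > 0 only for countably many c; any other c \<in> (s, t) gives the theorem. *)

section \<open>Invertible elements of a Banach algebra\<close>

definition is_invertible :: "'a::ring_1 \<Rightarrow> bool" where
  "is_invertible x \<longleftrightarrow> (\<exists>b. b * x = 1 \<and> x * b = 1)"

definition ring_inv :: "'a::ring_1 \<Rightarrow> 'a" where
  "ring_inv x = (SOME b. b * x = 1 \<and> x * b = 1)"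

lemma inv_unique: fixes x b c :: "'a::ring_1" assumes "b * x = 1" "x * c = 1" shows "b = c"
proof -
  have "b = b * (x * c)" using assms by simp
  also have "\<dots> = (b * x) * c" by (simp add: mult.assoc)
  finally show ?thesis using assms by simp
qed

lemma is_invertible_mult: "is_invertible x \<Longrightarrow> is_invertible y \<Longrightarrow> is_invertible (x * y)"
proof -
  assume "is_invertible x" "is_invertible y"
  then obtain a b where a: "a * x = 1" "x * a = 1" and b: "b * y = 1" "y * b = 1"
    unfolding is_invertible_def by blast
  have "(b * a) * (x * y) = b * (a * x) * y" by (simp add: mult.assoc)
  moreover have "(x * y) * (b * a) = x * (y * b) * a" by (simp add: mult.assoc)
  ultimately show ?thesis unfolding is_invertible_def using a b by auto
qed

lemma is_invertible_one: "is_invertible 1"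
  unfolding is_invertible_def by auto

lemma not_is_invertible_zero: "\<not> is_invertible (0::'a::ring_1)"
  unfolding is_invertible_def by auto

lemma ring_inv: "is_invertible x \<Longrightarrow> ring_inv x * x = 1 \<and> x * ring_inv x = 1"
  unfolding is_invertible_def ring_inv_def by (rule someI_ex)

lemma ring_inv_eq: "b * x = 1 \<Longrightarrow> x * c = 1 \<Longrightarrow> ring_inv x = b"
  by (metis inv_unique is_invertible_def ring_inv)

text \<open>The geometric sum identity, valid in any ring since all terms are powers of one element.\<close>
lemma geom_sum_ring: fixes s :: "'a::ring_1"
  shows "(1 - s) * (\<Sum>i<n. s^i) = 1 - s^n" and "(\<Sum>i<n. s^i) * (1 - s) = 1 - s^n"
proof -
  show "(1 - s) * (\<Sum>i<n. s^i) = 1 - s^n"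
  proof (induction n)
    case (Suc n)
    have "(1 - s) * (\<Sum>i<Suc n. s^i) = (1 - s) * (\<Sum>i<n. s^i) + (1 - s) * s^n"
      by (simp add: distrib_left)
    also have "\<dots> = 1 - s ^ Suc n" using Suc by (simp add: algebra_simps)
    finally show ?case .
  qed simp
  show "(\<Sum>i<n. s^i) * (1 - s) = 1 - s^n"
  proof (induction n)
    case (Suc n)
    have "(\<Sum>i<Suc n. s^i) * (1 - s) = (\<Sum>i<n. s^i) * (1 - s) + s^n * (1 - s)"
      by (simp add: distrib_right)
    also have "\<dots> = 1 - s ^ Suc n" using Suc by (simp add: algebra_simps) (metis power_Suc power_Suc2)
    finally show ?case .
  qed simp
qed

lemma neumann:
  fixes y :: "'a::{real_normed_algebra_1,banach}"
  assumes "norm y < 1"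
  shows "\<exists>b. b * (1 - y) = 1 \<and> (1 - y) * b = 1 \<and> norm b \<le> 1 / (1 - norm y)
           \<and> norm (b - 1) \<le> norm y / (1 - norm y)"
proof -
  have sn: "summable (\<lambda>n. norm y ^ n)" using assms by (simp add: summable_geometric)
  have sy: "summable (\<lambda>n. norm (y ^ n))"
    by (rule summable_comparison_test[OF _ sn]) (auto intro: norm_power_ineq)
  hence sy': "summable (\<lambda>n. y ^ n)" by (rule summable_norm_cancel)
  define b where "b = (\<Sum>n. y ^ n)"
  have sums: "(\<lambda>N. \<Sum>i<N. y ^ i) \<longlonglongrightarrow> b" using sy' unfolding b_def by (simp add: summable_LIMSEQ)
  have y0: "(\<lambda>N. y ^ N) \<longlonglongrightarrow> 0"
  proof -
    have "(\<lambda>N. norm y ^ N) \<longlonglongrightarrow> 0" using assms by (simp add: LIMSEQ_power_zero)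
    thus ?thesis
      by (rule Lim_null_comparison[rotated]) (auto intro: always_eventually norm_power_ineq)
  qed
  have l1: "(\<lambda>N. (1 - y) * (\<Sum>i<N. y ^ i)) \<longlonglongrightarrow> (1 - y) * b"
    by (intro tendsto_intros sums)
  have l2: "(\<lambda>N. (\<Sum>i<N. y ^ i) * (1 - y)) \<longlonglongrightarrow> b * (1 - y)"
    by (intro tendsto_intros sums)
  have l3: "(\<lambda>N. 1 - y ^ N) \<longlonglongrightarrow> 1" using tendsto_diff[OF tendsto_const y0, of 1] by simp
  have e1: "(1 - y) * b = 1" using l1 l3 by (simp add: geom_sum_ring LIMSEQ_unique)
  have e2: "b * (1 - y) = 1" using l2 l3 by (simp add: geom_sum_ring LIMSEQ_unique)
  have nb: "norm b \<le> 1 / (1 - norm y)"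
  proof -
    have "norm b \<le> (\<Sum>n. norm (y ^ n))" unfolding b_def by (rule summable_norm[OF sy])
    also have "\<dots> \<le> (\<Sum>n. norm y ^ n)"
      by (rule suminf_le[OF _ sy sn]) (simp add: norm_power_ineq)
    also have "\<dots> = 1 / (1 - norm y)" using assms by (simp add: suminf_geometric)
    finally show ?thesis .
  qed
  have "b - 1 = b * y" using e2 by (simp add: algebra_simps)
  hence "norm (b - 1) \<le> norm b * norm y" by (simp add: norm_mult_ineq)
  also have "\<dots> \<le> 1 / (1 - norm y) * norm y" by (rule mult_right_mono[OF nb norm_ge_zero])
  finally have "norm (b - 1) \<le> norm y / (1 - norm y)" by simp
  thus ?thesis using e1 e2 nb by blast
qed

lemma perturb_inv:
  fixes x z b :: "'a::{real_normed_algebra_1,banach}"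
  assumes "b * x = 1" "x * b = 1" "norm b * norm (z - x) < 1"
  shows "\<exists>c. c * z = 1 \<and> z * c = 1 \<and>
     norm (c - b) \<le> norm b * (norm b * norm (z - x)) / (1 - norm b * norm (z - x))"
proof -
  define w where "w = b * (x - z)"
  have nw: "norm w \<le> norm b * norm (z - x)"
    unfolding w_def using norm_mult_ineq[of b "x - z"] by (simp add: norm_minus_commute)
  hence nw1: "norm w < 1" using assms(3) by simp
  obtain d where d: "d * (1 - w) = 1" "(1 - w) * d = 1" "norm (d - 1) \<le> norm w / (1 - norm w)"
    using neumann[OF nw1] by blast
  have zx: "z = x * (1 - w)" unfolding w_def using assms(2) by (simp add: algebra_simps mult.assoc[symmetric])
  have c1: "(d * b) * z = 1" unfolding zx
    by (metis assms(1) d(1) mult.assoc mult_1_left)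
  have c2: "z * (d * b) = 1"
  proof -
    have "z * (d * b) = x * ((1 - w) * d) * b" unfolding zx by (simp add: mult.assoc)
    thus ?thesis using d(2) assms(2) by simp
  qed
  have "d * b - b = (d - 1) * b" by (simp add: algebra_simps)
  hence "norm (d * b - b) \<le> norm (d - 1) * norm b" by (simp add: norm_mult_ineq)
  also have "\<dots> \<le> norm w / (1 - norm w) * norm b" by (rule mult_right_mono[OF d(3) norm_ge_zero])
  also have "\<dots> \<le> (norm b * norm (z - x)) / (1 - norm b * norm (z - x)) * norm b"
  proof (rule mult_right_mono[OF _ norm_ge_zero])
    show "norm w / (1 - norm w) \<le> norm b * norm (z - x) / (1 - norm b * norm (z - x))"
      using nw nw1 assms(3) by (intro frac_le) auto
  qed
  finally show ?thesis using c1 c2 by (auto simp: mult.commute)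
qed

lemma open_invertible: "open {z::'a::{real_normed_algebra_1,banach}. is_invertible z}"
proof (rule openI)
  fix x :: 'a assume "x \<in> {z. is_invertible z}"
  then obtain b where b: "b * x = 1" "x * b = 1" unfolding is_invertible_def by blast
  have "ball x (1 / (norm b + 1)) \<subseteq> {z. is_invertible z}"
  proof
    fix z assume "z \<in> ball x (1 / (norm b + 1))"
    hence "norm (z - x) < 1 / (norm b + 1)" by (simp add: dist_norm norm_minus_commute)
    hence "(norm b + 1) * norm (z - x) < 1"
      by (simp add: pos_less_divide_eq[of "norm b + 1"] add_nonneg_pos mult.commute)
    moreover have "norm b * norm (z - x) \<le> (norm b + 1) * norm (z - x)"
      by (simp add: mult_right_mono)
    ultimately show "z \<in> {z. is_invertible z}"
      using perturb_inv[OF b, of z] unfolding is_invertible_def by force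
  qed
  thus "\<exists>e>0. ball x e \<subseteq> {z. is_invertible z}"
    by (intro exI[of _ "1 / (norm b + 1)"]) (simp add: add_nonneg_pos)
qed

text \<open>Inversion is continuous; quantitatively \<open>\<parallel>z\<inverse> - x\<inverse>\<parallel> \<le> 2\<parallel>x\<inverse>\<parallel>\<^sup>2\<parallel>z - x\<parallel>\<close> near \<open>x\<close>.\<close>
lemma continuous_on_ring_inv:
  "continuous_on {z::'a::{real_normed_algebra_1,banach}. is_invertible z} ring_inv"
proof (rule continuous_on_iff[THEN iffD2], intro ballI allI impI)
  fix x :: 'a and e :: real
  assume x: "x \<in> {z. is_invertible z}" and e: "e > 0"
  define b where "b = ring_inv x"
  have b: "b * x = 1" "x * b = 1" using ring_inv x unfolding b_def by auto
  define M where "M = norm b + 1"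
  have M: "M \<ge> 1" unfolding M_def by simp
  define d where "d = min (1 / (2 * M)) (e / (2 * M\<^sup>2))"
  have d: "d > 0" unfolding d_def using M e by simp
  have "dist (ring_inv z) (ring_inv x) < e" if z: "dist z x < d" for z
  proof -
    define t where "t = norm b * norm (z - x)"
    have zx: "norm (z - x) < d" using z by (simp add: dist_norm)
    have tM: "t \<le> M * norm (z - x)" unfolding t_def M_def by (simp add: mult_right_mono)
    have "M * norm (z - x) \<le> M * (1 / (2 * M))"
      using zx M unfolding d_def by (intro mult_left_mono) auto
    hence t2: "t \<le> 1/2" using tM M by simp
    obtain c where c: "c * z = 1" "z * c = 1" "norm (c - b) \<le> norm b * t / (1 - t)"
      using perturb_inv[OF b, of z] t2 unfolding t_def by auto
    have "norm b * t / (1 - t) \<le> norm b * t / (1/2)"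
      using t2 by (intro divide_left_mono) (auto simp: t_def)
    also have "\<dots> = 2 * (norm b * t)" by simp
    also have "\<dots> \<le> 2 * (M * (M * norm (z - x)))"
      using tM M by (intro mult_left_mono mult_mono) (auto simp: M_def t_def)
    also have "\<dots> < 2 * (M * (M * d))"
      using zx M by (intro mult_strict_left_mono) auto
    also have "\<dots> \<le> 2 * (M * (M * (e / (2 * M\<^sup>2))))"
      unfolding d_def using M by (intro mult_left_mono) auto
    also have "\<dots> = e" using M by (simp add: power2_eq_square)
    finally show ?thesis using c ring_inv_eq[of c z c] b_def by (simp add: dist_norm)
  qed
  thus "\<exists>d>0. \<forall>z\<in>{z. is_invertible z}. dist z x < d \<longrightarrow> dist (ring_inv z) (ring_inv x) < e"
    using d by blast
qed


section \<open>Basic algebra of a unital C*-algebra\<close>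

locale cstar =
  fixes st :: "'a::{real_normed_algebra_1,banach} \<Rightarrow> 'a" and sc :: "complex \<Rightarrow> 'a \<Rightarrow> 'a"
  assumes cs: "unital_cstar_algebra st sc"
begin

lemma sc_real: "sc (complex_of_real r) x = r *\<^sub>R x"
  using cs unfolding unital_cstar_algebra_def by (elim conjE) metis
lemma sc_assoc: "sc a (sc b x) = sc (a * b) x"
  using cs unfolding unital_cstar_algebra_def by (elim conjE) metis
lemma sc_addl: "sc (a + b) x = sc a x + sc b x"
  using cs unfolding unital_cstar_algebra_def by (elim conjE) metis
lemma sc_addr: "sc a (x + y) = sc a x + sc a y"
  using cs unfolding unital_cstar_algebra_def by (elim conjE) metis
lemma sc_multl: "sc a (x * y) = sc a x * y"
  using cs unfolding unital_cstar_algebra_def by (elim conjE) metis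
lemma sc_multr: "sc a (x * y) = x * sc a y"
  using cs unfolding unital_cstar_algebra_def by (elim conjE) metis
lemma norm_sc: "norm (sc a x) = cmod a * norm x"
  using cs unfolding unital_cstar_algebra_def by (elim conjE) metis
lemma st_st[simp]: "st (st x) = x"
  using cs unfolding unital_cstar_algebra_def by (elim conjE) metis
lemma st_add: "st (x + y) = st x + st y"
  using cs unfolding unital_cstar_algebra_def by (elim conjE) metis
lemma st_mult: "st (x * y) = st y * st x"
  using cs unfolding unital_cstar_algebra_def by (elim conjE) metis
lemma st_sc: "st (sc a x) = sc (cnj a) (st x)"
  using cs unfolding unital_cstar_algebra_def by (elim conjE) metis
lemma cstar_id: "norm (st x * x) = (norm x)\<^sup>2"
  using cs unfolding unital_cstar_algebra_def by (elim conjE) metis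

lemma sc_one[simp]: "sc 1 x = x"
  using sc_real[of 1 x] by simp
lemma sc_zero[simp]: "sc 0 x = 0"
  using sc_real[of 0 x] by simp
lemma sc_minusl: "sc (- a) x = - sc a x"
  using sc_addl[of "-a" a x] by (metis add.commute neg_eq_iff_add_eq_0 sc_zero add.left_inverse)
lemma sc_diffl: "sc (a - b) x = sc a x - sc b x"
  using sc_addl[of a "-b" x] sc_minusl by simp
lemma sc_zero_right[simp]: "sc a 0 = 0"
  using sc_addr[of a 0 0] by simp
lemma sc_minusr: "sc a (- x) = - sc a x"
  using sc_addr[of a x "-x"] by (metis neg_eq_iff_add_eq_0 sc_zero_right add.right_inverse)
lemma sc_diffr: "sc a (x - y) = sc a x - sc a y"
  using sc_addr[of a x "-y"] sc_minusr by simp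
lemma sc_1l: "sc a 1 * x = sc a x" by (metis sc_multl mult_1_left)
lemma sc_1r: "x * sc a 1 = sc a x" by (metis sc_multr mult_1_right)
lemma sc_11: "sc a 1 * sc b 1 = sc (a * b) 1" by (metis sc_1l sc_assoc)
lemma sc_mult_sc: "sc c x * sc d y = sc (c * d) (x * y)"
  by (metis sc_assoc sc_multl sc_multr)
lemma sc_power: "(sc c x) ^ n = sc (c ^ n) (x ^ n)"
  by (induction n) (auto simp: sc_mult_sc)
lemma sc_of_real: "sc (complex_of_real r) 1 = of_real r"
  using sc_real[of r 1] by (simp add: scaleR_conv_of_real)
lemma sc_sum: "sc a (sum f A) = (\<Sum>i\<in>A. sc a (f i))"
  by (induction A rule: infinite_finite_induct) (auto simp: sc_addr)
lemma sc_suml: "sc (sum f A) x = (\<Sum>i\<in>A. sc (f i) x)"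
  by (induction A rule: infinite_finite_induct) (auto simp: sc_addl)

lemma bounded_linear_sc_left: "bounded_linear (\<lambda>\<mu>. sc \<mu> x)"
proof (rule bounded_linear_intro[where K = "norm x"])
  show "sc (\<mu> + \<nu>) x = sc \<mu> x + sc \<nu> x" for \<mu> \<nu> by (rule sc_addl)
  show "sc (r *\<^sub>R \<mu>) x = r *\<^sub>R sc \<mu> x" for r \<mu>
    by (metis sc_assoc sc_real scaleR_conv_of_real)
  show "norm (sc \<mu> x) \<le> norm \<mu> * norm x" for \<mu> by (simp add: norm_sc)
qed

lemma st_zero[simp]: "st 0 = 0"
  using st_add[of 0 0] by simp
lemma st_one[simp]: "st 1 = 1"
proof -
  have "st 1 = st 1 * st (st 1)" by simp
  also have "\<dots> = st (st 1 * 1)" by (simp only: st_mult)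
  finally show ?thesis by simp
qed
lemma st_minus: "st (- x) = - st x"
  using st_add[of x "-x"] by (metis neg_eq_iff_add_eq_0 st_zero add.right_inverse)
lemma st_diff: "st (x - y) = st x - st y"
  using st_add[of x "-y"] st_minus by simp
lemma st_scaleR: "st (r *\<^sub>R x) = r *\<^sub>R st x"
  by (metis st_sc sc_real complex_cnj_complex_of_real)
lemma st_power: "st (x ^ n) = (st x) ^ n"
  by (induction n) (auto simp: st_mult power_commutes)
lemma st_sum: "st (sum f A) = (\<Sum>i\<in>A. st (f i))"
  by (induction A rule: infinite_finite_induct) (auto simp: st_add)
lemma st_of_real: "st (of_real r) = of_real r"
  by (simp add: of_real_def st_scaleR)

text \<open>The involution is isometric; this follows from the C*-identity.\<close>
lemma norm_st[simp]: "norm (st x) = norm x"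
proof -
  have a: "norm y \<le> norm (st y)" for y
  proof (cases "y = 0")
    case False
    have "(norm y)\<^sup>2 \<le> norm (st y) * norm y"
      using cstar_id[of y] norm_mult_ineq[of "st y" y] by simp
    thus ?thesis using False by (simp add: power2_eq_square)
  qed simp
  show ?thesis using a[of x] a[of "st x"] by simp
qed

definition sa :: "'a \<Rightarrow> bool" where "sa x \<longleftrightarrow> st x = x"

lemma sa_power: "sa h \<Longrightarrow> sa (h ^ n)" by (simp add: sa_def st_power)

text \<open>It holds for
  powers of two by the C*-identity, and in general by squeezing between powers of two.\<close>
lemma norm_sa_pow2: "sa h \<Longrightarrow> norm (h ^ (2 ^ k)) = norm h ^ (2 ^ k)"
proof (induction k)
  case (Suc k)
  have "h ^ (2 ^ Suc k) = st (h ^ (2 ^ k)) * h ^ (2^k)"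
    using sa_power[OF Suc.prems, of "2 ^ k"] by (simp add: sa_def power_add[symmetric] mult_2)
  hence "norm (h ^ (2 ^ Suc k)) = (norm (h ^ (2^k)))\<^sup>2" by (simp add: cstar_id)
  thus ?case using Suc by (simp add: power_mult[symmetric] mult.commute)
qed simp

lemma norm_sa_power: assumes "sa h" shows "norm (h ^ n) = norm h ^ n"
proof (cases "h = 0")
  case True thus ?thesis by (cases n) auto
next
  case False
  have le: "norm (h ^ n) \<le> norm h ^ n" by (rule norm_power_ineq)
  obtain k where k: "n \<le> 2 ^ k" using less_exp[of n] less_imp_le by blast
  have "norm h ^ (2^k) = norm (h ^ n * h ^ (2^k - n))"
    using norm_sa_pow2[OF assms, of k] k by (simp add: power_add[symmetric])
  also have "\<dots> \<le> norm (h ^ n) * norm (h ^ (2^k - n))"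
    by (rule norm_mult_ineq)
  also have "\<dots> \<le> norm (h ^ n) * norm h ^ (2^k - n)"
    by (rule mult_left_mono[OF norm_power_ineq norm_ge_zero])
  finally have "norm h ^ n * norm h ^ (2^k - n) \<le> norm (h ^ n) * norm h ^ (2^k - n)"
    using k by (simp add: power_add[symmetric])
  hence "norm h ^ n \<le> norm (h ^ n)" using False by (simp add: mult_le_cancel_right)
  thus ?thesis using le by simp
qed


section \<open>The spectrum\<close>

lemma spec_iff: "c \<in> cspectrum sc x \<longleftrightarrow> \<not> is_invertible (x - sc c 1)"
  unfolding cspectrum_def is_invertible_def by simp

lemma is_invertible_sc1: "c \<noteq> 0 \<Longrightarrow> is_invertible (sc c 1)"
  unfolding is_invertible_def by (rule exI[of _ "sc (1/c) 1"]) (simp add: sc_11)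

text \<open>For \<open>\<mu> \<noteq> 0\<close>, \<open>1 - \<mu>x\<close> is invertible exactly when \<open>1/\<mu>\<close> is not a spectral value of \<open>x\<close>;
  this links spectra to the resolvent \<open>\<mu> \<mapsto> (1 - \<mu>x)\<inverse>\<close>, which is defined near \<open>0\<close>.\<close>
lemma invertible_one_minus_sc_iff:
  assumes "\<mu> \<noteq> 0"
  shows "is_invertible (1 - sc \<mu> x) \<longleftrightarrow> 1 / \<mu> \<notin> cspectrum sc x"
proof -
  have f1: "1 - sc \<mu> x = sc (-\<mu>) 1 * (x - sc (1 / \<mu>) 1)"
    using assms by (simp add: right_diff_distrib sc_1l sc_11 sc_minusl sc_assoc)
  have f2: "x - sc (1 / \<mu>) 1 = sc (- (1 / \<mu>)) 1 * (1 - sc \<mu> x)"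
    using assms by (simp add: right_diff_distrib sc_1l sc_11 sc_minusl sc_assoc)
  show ?thesis unfolding spec_iff
    using is_invertible_mult[OF is_invertible_sc1] f1 f2 assms by (metis divide_eq_0_iff neg_equal_0_iff_equal one_neq_zero)
qed

text \<open>Spectral values are bounded by the norm (Neumann series).\<close>
lemma spec_bound: assumes "c \<in> cspectrum sc x" shows "cmod c \<le> norm x"
proof (rule ccontr)
  assume "\<not> cmod c \<le> norm x"
  hence c0: "c \<noteq> 0" and lt: "norm x < cmod c" by auto
  have "norm (sc (1/c) x) < 1" using lt c0 by (simp add: norm_sc norm_divide field_simps)
  then obtain b where "b * (1 - sc (1/c) x) = 1" "(1 - sc (1/c) x) * b = 1" using neumann by blast
  hence "is_invertible (1 - sc (1/c) x)" unfolding is_invertible_def by blast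
  thus False using invertible_one_minus_sc_iff[of "1/c" x] c0 assms by simp
qed

text \<open>The spectrum is closed, being the complement of the preimage of the open set of
  invertible elements under the continuous map \<open>c \<mapsto> x - c\<close>; likewise the domain of the
  resolvent \<open>\<mu> \<mapsto> (1 - \<mu>x)\<inverse>\<close> is open, and the resolvent is continuous there.\<close>
lemma spec_closed: "closed (cspectrum sc x)"
proof -
  have "cspectrum sc x = - ((\<lambda>c. x - sc c 1) -` {z. is_invertible z})"
    by (auto simp: spec_iff)
  moreover have "open ((\<lambda>c. x - sc c 1) -` {z. is_invertible z})"
    using bounded_linear_sc_left[of 1]
    by (intro continuous_open_vimage open_invertible continuous_intros linear_continuous_at)
  ultimately show ?thesis by (simp add: closed_Compl)
qed

lemma resolvent_domain_open: "open {\<mu>. is_invertible (1 - sc \<mu> x)}"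
proof -
  have "open ((\<lambda>\<mu>. 1 - sc \<mu> x) -` {z. is_invertible z})"
    using bounded_linear_sc_left[of x]
    by (intro continuous_open_vimage open_invertible continuous_intros linear_continuous_at)
  thus ?thesis by (simp add: vimage_def)
qed

lemma resolvent_continuous:
  "continuous_on {\<mu>. is_invertible (1 - sc \<mu> x)} (\<lambda>\<mu>. ring_inv (1 - sc \<mu> x))"
  using bounded_linear_sc_left[of x]
  by (intro continuous_on_compose2[OF continuous_on_ring_inv] continuous_intros linear_continuous_on)
     auto

end

section \<open>Self-adjoint elements have a spectral value of modulus \<open>\<parallel>y\<parallel>\<close>\<close>

text \<open>Instead of the Cauchy-integral proof of the spectral radius formula we average the
  resolvent over the \<open>n\<close>-th roots of unity: if \<open>1 - \<mu>x\<close> is invertible on the whole circle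
  \<open>|\<mu>| = r\<close>, the average of its inverses is the inverse of \<open>1 - r\<^sup>nx\<^sup>n\<close>. Lipschitz continuity of
  the resolvent in \<open>r\<close> then propagates the decay of \<open>r\<^sup>n\<parallel>x\<^sup>n\<parallel>\<close> outwards step by step up to the
  radius \<open>R\<close> on which the resolvent is defined.\<close>

definition unit_root :: "nat \<Rightarrow> complex" where
  "unit_root n = exp (2 * of_real pi * \<i> / of_nat n)"

lemma root_unity_sum:
  assumes "0 < j" "j < n"
  shows "(\<Sum>k<n. (unit_root n ^ j) ^ k) = 0"
proof -
  define w where "w = unit_root n ^ j"
  have n1: "1 \<le> n" using assms by simp
  have w: "w = exp (2 * of_real pi * \<i> * of_nat j / of_nat n)"
    unfolding w_def unit_root_def by (simp add: exp_of_nat_mult[symmetric] mult.commute mult.left_commute)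
  have "w \<noteq> 1" unfolding w using complex_root_unity_eq_1[OF n1, of j] assms
    by (simp add: nat_dvd_not_less)
  moreover have "w ^ n = 1" unfolding w using complex_root_unity[of n j] assms by simp
  ultimately show ?thesis unfolding w_def[symmetric] by (simp add: geometric_sum)
qed

lemma norm_unit_root_pow: "cmod (unit_root n ^ k) = 1"
  by (simp add: unit_root_def norm_power norm_exp_eq_Re)

lemma unit_root_pow_n: "n \<ge> 1 \<Longrightarrow> (unit_root n ^ k) ^ n = 1"
proof -
  assume "n \<ge> 1"
  hence "unit_root n ^ n = 1" using complex_root_unity[of n 1] by (simp add: unit_root_def)
  thus ?thesis by (metis power_mult mult.commute power_one)
qed

context cstar begin

lemma root_average_inverse:
  fixes g :: "complex \<Rightarrow> 'a"
  assumes n: "n \<ge> 1" and g: "\<And>\<mu>. cmod \<mu> = cmod \<mu>0 \<Longrightarrow> (1 - sc \<mu> x) * g \<mu> = 1"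
  shows "(1 - sc (\<mu>0 ^ n) (x ^ n)) * sc (1 / of_nat n) (\<Sum>k<n. g (unit_root n ^ k * \<mu>0)) = 1"
proof -
  define w where "w = unit_root n"
  have each: "(1 - sc (\<mu>0 ^ n) (x ^ n)) * g (w ^ k * \<mu>0) = (\<Sum>j<n. sc ((w^k * \<mu>0) ^ j) (x ^ j))" for k
  proof -
    define s where "s = sc (w^k * \<mu>0) x"
    have sn: "s ^ n = sc (\<mu>0 ^ n) (x ^ n)" unfolding s_def sc_power
      using unit_root_pow_n[OF n, of k] by (simp add: power_mult_distrib w_def)
    have gg: "(1 - s) * g (w ^ k * \<mu>0) = 1" unfolding s_def
      by (rule g) (simp add: norm_mult w_def norm_unit_root_pow)
    have "(1 - s ^ n) * g (w ^ k * \<mu>0) = (\<Sum>j<n. s ^ j) * ((1 - s) * g (w ^ k * \<mu>0))"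
      by (simp add: geom_sum_ring(2)[symmetric] mult.assoc)
    also have "\<dots> = (\<Sum>j<n. s ^ j)" using gg by simp
    finally show ?thesis unfolding sn[symmetric] by (simp add: s_def sc_power)
  qed
  have "(1 - sc (\<mu>0 ^ n) (x ^ n)) * (\<Sum>k<n. g (w ^ k * \<mu>0))
        = (\<Sum>k<n. \<Sum>j<n. sc ((w^k * \<mu>0) ^ j) (x ^ j))"
    by (simp add: sum_distrib_left each)
  also have "\<dots> = (\<Sum>j<n. \<Sum>k<n. sc ((w^k * \<mu>0) ^ j) (x ^ j))" by (rule sum.swap)
  also have "\<dots> = (\<Sum>j<n. sc (\<Sum>k<n. (w^k * \<mu>0) ^ j) (x ^ j))" by (simp add: sc_suml)
  also have "\<dots> = (\<Sum>j<n. if j = 0 then sc (of_nat n) 1 else 0)"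
  proof (rule sum.cong[OF refl])
    fix j assume j: "j \<in> {..<n}"
    show "sc (\<Sum>k<n. (w^k * \<mu>0) ^ j) (x ^ j) = (if j = 0 then sc (of_nat n) 1 else 0)"
    proof (cases "j = 0")
      case False
      have "(\<Sum>k<n. (w^k * \<mu>0) ^ j) = \<mu>0 ^ j * (\<Sum>k<n. (w ^ j) ^ k)"
        by (simp add: power_mult_distrib sum_distrib_left mult.commute power_mult[symmetric])
      also have "\<dots> = 0" using root_unity_sum[of j n] False j unfolding w_def by simp
      finally show ?thesis using False by simp
    qed simp
  qed
  also have "\<dots> = sc (of_nat n) 1" using n by (simp add: sum.delta)
  finally have *: "(1 - sc (\<mu>0 ^ n) (x ^ n)) * (\<Sum>k<n. g (w ^ k * \<mu>0)) = sc (of_nat n) 1" .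
  have "(1 - sc (\<mu>0 ^ n) (x ^ n)) * sc (1 / of_nat n) (\<Sum>k<n. g (w ^ k * \<mu>0))
     = sc (1 / of_nat n) ((1 - sc (\<mu>0 ^ n) (x ^ n)) * (\<Sum>k<n. g (w ^ k * \<mu>0)))"
    by (simp add: sc_multr)
  also have "\<dots> = 1" unfolding * using n by (simp add: sc_assoc)
  finally show ?thesis unfolding w_def .
qed

lemma norm_le_3_if_inverse_near_one:
  fixes z c :: 'a
  assumes "(1 - z) * c = 1" "norm (c - 1) \<le> 1/2"
  shows "norm z \<le> 3"
proof -
  have "norm (1 - c) < 1" using assms(2) by (simp add: norm_minus_commute)
  from neumann[OF this] obtain d where d: "(1 - (1 - c)) * d = 1" "norm d \<le> 1 / (1 - norm (1 - c))"
    by blast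
  have "norm d \<le> 2"
  proof -
    have "1 - norm (1 - c) \<ge> 1/2" using assms(2) by (simp add: norm_minus_commute)
    hence "1 / (1 - norm (1 - c)) \<le> 2" by (simp add: divide_le_eq)
    thus ?thesis using d(2) by simp
  qed
  have "1 - z = (1 - z) * c * d" using d(1) by (simp add: mult.assoc)
  hence "norm (1 - z) \<le> 2" using assms(1) \<open>norm d \<le> 2\<close> by simp
  moreover have "norm z \<le> norm (1::'a) + norm (1 - z)"
    using norm_triangle_ineq4[of 1 "1 - z"] by simp
  ultimately show ?thesis by simp
qed

definition root_avg :: "'a \<Rightarrow> nat \<Rightarrow> real \<Rightarrow> 'a" where
  "root_avg x n r = sc (1 / of_nat n) (\<Sum>k<n. ring_inv (1 - sc (unit_root n ^ k * complex_of_real r) x))"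

lemma root_avg_inverse:
  assumes inv: "\<And>\<mu>. cmod \<mu> \<le> R \<Longrightarrow> is_invertible (1 - sc \<mu> x)"
    and "n \<ge> 1" "0 \<le> r" "r \<le> R"
  shows "(1 - sc (complex_of_real (r ^ n)) (x ^ n)) * root_avg x n r = 1"
  using root_average_inverse[OF assms(2), of "complex_of_real r" x "\<lambda>\<mu>. ring_inv (1 - sc \<mu> x)"]
    ring_inv[OF inv] assms(3,4) unfolding root_avg_def by (simp add: of_real_power)

text \<open>On a closed disc of invertibility the resolvent is bounded (by compactness) and hence
  Lipschitz, by the resolvent identity \<open>g \<mu> - g \<mu>' = (\<mu> - \<mu>') g \<mu> x g \<mu>'\<close>.\<close>
lemma resolvent_lipschitz:
  assumes inv: "\<And>\<mu>. cmod \<mu> \<le> R \<Longrightarrow> is_invertible (1 - sc \<mu> x)"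
  obtains L where "L > 0" "\<And>\<mu> \<mu>'. cmod \<mu> \<le> R \<Longrightarrow> cmod \<mu>' \<le> R \<Longrightarrow>
    norm (ring_inv (1 - sc \<mu> x) - ring_inv (1 - sc \<mu>' x)) \<le> L * cmod (\<mu> - \<mu>')"
proof -
  define g where "g \<mu> = ring_inv (1 - sc \<mu> x)" for \<mu>
  have g: "cmod \<mu> \<le> R \<Longrightarrow> g \<mu> * (1 - sc \<mu> x) = 1 \<and> (1 - sc \<mu> x) * g \<mu> = 1" for \<mu>
    unfolding g_def using ring_inv[OF inv] by blast
  have "continuous_on (cball 0 R) g"
    unfolding g_def using inv
    by (intro continuous_on_subset[OF resolvent_continuous]) auto
  hence "bounded (g ` cball 0 R)" by (intro compact_imp_bounded compact_continuous_image) auto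
  then obtain K where K: "K > 0" "\<And>\<mu>. \<mu> \<in> cball 0 R \<Longrightarrow> norm (g \<mu>) \<le> K"
    unfolding bounded_pos by blast
  have "norm (g \<mu> - g \<mu>') \<le> (K * K * norm x + 1) * cmod (\<mu> - \<mu>')"
    if "cmod \<mu> \<le> R" "cmod \<mu>' \<le> R" for \<mu> \<mu>'
  proof -
    have "g \<mu> * ((1 - sc \<mu>' x) - (1 - sc \<mu> x)) * g \<mu>'
        = g \<mu> * ((1 - sc \<mu>' x) * g \<mu>') - (g \<mu> * (1 - sc \<mu> x)) * g \<mu>'"
      by (simp add: algebra_simps)
    also have "\<dots> = g \<mu> - g \<mu>'" using g that by simp
    finally have eq: "g \<mu> - g \<mu>' = g \<mu> * sc (\<mu> - \<mu>') x * g \<mu>'" by (simp add: sc_diffl)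
    have "norm (g \<mu> * sc (\<mu> - \<mu>') x * g \<mu>') \<le> norm (g \<mu>) * norm (sc (\<mu> - \<mu>') x) * norm (g \<mu>')"
      by (meson mult_right_mono norm_ge_zero norm_mult_ineq order_trans)
    also have "\<dots> \<le> K * (cmod (\<mu> - \<mu>') * norm x) * K"
      using K that by (intro mult_mono) (auto simp: norm_sc)
    also have "\<dots> \<le> (K * K * norm x + 1) * cmod (\<mu> - \<mu>')" by (simp add: algebra_simps)
    finally show ?thesis unfolding eq .
  qed
  moreover have "K * K * norm x + 1 > 0" using K by (simp add: add_nonneg_pos)
  ultimately show ?thesis using that unfolding g_def by blast
qed

lemma root_avg_lipschitz:
  assumes inv: "\<And>\<mu>. cmod \<mu> \<le> R \<Longrightarrow> is_invertible (1 - sc \<mu> x)"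
  obtains L where "L > 0" "\<And>n r r'. n \<ge> 1 \<Longrightarrow> 0 \<le> r \<Longrightarrow> r \<le> R \<Longrightarrow> 0 \<le> r' \<Longrightarrow> r' \<le> R \<Longrightarrow>
    norm (root_avg x n r - root_avg x n r') \<le> L * \<bar>r - r'\<bar>"
proof -
  obtain L where L: "L > 0" and lip: "\<And>\<mu> \<mu>'. cmod \<mu> \<le> R \<Longrightarrow> cmod \<mu>' \<le> R \<Longrightarrow>
      norm (ring_inv (1 - sc \<mu> x) - ring_inv (1 - sc \<mu>' x)) \<le> L * cmod (\<mu> - \<mu>')"
    using resolvent_lipschitz[where R=R and x=x, OF inv] by blast
  define g where "g \<mu> = ring_inv (1 - sc \<mu> x)" for \<mu>
  define w where "w = unit_root"
  have "norm (root_avg x n r - root_avg x n r') \<le> L * \<bar>r - r'\<bar>"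
    if "n \<ge> 1" "0 \<le> r" "r \<le> R" "0 \<le> r'" "r' \<le> R" for n r r'
  proof -
    have "root_avg x n r - root_avg x n r' = sc (1 / of_nat n) (\<Sum>k<n. g (w n ^ k * r) - g (w n ^ k * r'))"
      unfolding root_avg_def g_def w_def by (simp add: sc_diffr sum_subtractf)
    hence "norm (root_avg x n r - root_avg x n r')
        \<le> (1 / n) * (\<Sum>k<n. norm (g (w n ^ k * r) - g (w n ^ k * r')))"
      by (simp add: norm_sc norm_divide divide_right_mono norm_sum)
    also have "\<dots> \<le> (1 / n) * (\<Sum>k<n. L * \<bar>r - r'\<bar>)"
    proof (intro mult_left_mono sum_mono)
      fix k
      have nw: "cmod (w n ^ k) = 1" unfolding w_def by (rule norm_unit_root_pow)
      have "norm (g (w n ^ k * r) - g (w n ^ k * r')) \<le> L * cmod (w n ^ k * r - w n ^ k * r')"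
        unfolding g_def using that nw by (intro lip) (auto simp: norm_mult)
      also have "\<dots> = L * \<bar>r - r'\<bar>"
        using nw by (simp add: right_diff_distrib[symmetric] norm_mult of_real_diff[symmetric] del: of_real_diff)
      finally show "norm (g (w n ^ k * r) - g (w n ^ k * r')) \<le> L * \<bar>r - r'\<bar>" .
    qed simp
    also have "\<dots> = L * \<bar>r - r'\<bar>" using that by simp
    finally show ?thesis .
  qed
  thus ?thesis using that L by blast
qed

text \<open>The propagation step: decay of \<open>s\<^sup>n\<parallel>x\<^sup>n\<parallel>\<close> forces \<open>r1\<^sup>n\<parallel>x\<^sup>n\<parallel> \<le> 3\<close> eventually for all
  \<open>r1\<close> within \<open>1/(4L)\<close> of \<open>s\<close>: the averaged resolvents at \<open>s\<close> are close to \<open>1\<close> (Neumann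
  series), hence those at \<open>r1\<close> are within \<open>1/2\<close> of \<open>1\<close>.\<close>
lemma power_decay_propagates:
  fixes R L s r1 :: real
  assumes inv: "\<And>\<mu>. cmod \<mu> \<le> R \<Longrightarrow> is_invertible (1 - sc \<mu> x)"
    and L: "L > 0" "\<And>n r r1. n \<ge> 1 \<Longrightarrow> 0 \<le> r \<Longrightarrow> r \<le> R \<Longrightarrow> 0 \<le> r1 \<Longrightarrow> r1 \<le> R \<Longrightarrow>
      norm (root_avg x n r - root_avg x n r1) \<le> L * \<bar>r - r1\<bar>"
    and s: "0 \<le> s" "s \<le> R" "(\<lambda>n. s ^ n * norm (x ^ n)) \<longlonglongrightarrow> 0"
    and r1: "0 \<le> r1" "r1 \<le> R" "\<bar>r1 - s\<bar> \<le> 1 / (4 * L)"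
  shows "\<exists>N. \<forall>n\<ge>N. r1 ^ n * norm (x ^ n) \<le> 3"
proof -
  obtain N where N: "\<forall>n\<ge>N. s ^ n * norm (x ^ n) \<le> 1/8"
    using s(3)[THEN order_tendstoD(2), of "1/8"] unfolding eventually_sequentially
    by (auto intro: less_imp_le)
  have "r1 ^ n * norm (x ^ n) \<le> 3" if n: "n \<ge> max N 1" for n
  proof -
    define z where "z = sc (complex_of_real (s ^ n)) (x ^ n)"
    have nz: "norm z \<le> 1/8" unfolding z_def norm_sc using N n s by (auto simp: norm_power)
    hence "norm z < 1" by simp
    from neumann[OF this] obtain b where b: "b * (1 - z) = 1"
      "norm (b - 1) \<le> norm z / (1 - norm z)" by blast
    have "b = root_avg x n s"
      using inv_unique[OF b(1)] root_avg_inverse[where R=R and x=x and n=n and r=s, OF inv] n s unfolding z_def by auto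
    moreover have "norm z / (1 - norm z) \<le> 1/4" using nz by (simp add: divide_le_eq)
    ultimately have c1: "norm (root_avg x n s - 1) \<le> 1/4" using b(2) by (metis order_trans)
    have "norm (root_avg x n r1 - root_avg x n s) \<le> L * \<bar>r1 - s\<bar>" using L n r1 s by auto
    also have "\<dots> \<le> L * (1 / (4 * L))" using r1 L by (intro mult_left_mono) auto
    also have "\<dots> = 1/4" using L by simp
    finally have "norm (root_avg x n r1 - 1) \<le> 1/2"
      using c1 norm_triangle_ineq[of "root_avg x n r1 - root_avg x n s" "root_avg x n s - 1"] by simp
    hence "norm (sc (complex_of_real (r1 ^ n)) (x ^ n)) \<le> 3"
      using norm_le_3_if_inverse_near_one root_avg_inverse[where R=R and x=x and n=n and r=r1, OF inv] n r1 by auto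
    thus ?thesis using r1 by (simp add: norm_sc norm_power)
  qed
  thus ?thesis by blast
qed

end

lemma power_weighted_null:
  fixes a :: "nat \<Rightarrow> real"
  assumes bound: "\<exists>N. \<forall>n\<ge>N. r' ^ n * a n \<le> C" and a: "\<And>n. 0 \<le> a n" and rr: "0 \<le> r" "r < r'"
  shows "(\<lambda>n. r ^ n * a n) \<longlonglongrightarrow> 0"
proof -
  obtain N where N: "\<forall>n\<ge>N. r' ^ n * a n \<le> C" using bound by blast
  have q: "(\<lambda>n. C * (r / r') ^ n) \<longlonglongrightarrow> 0"
    using rr by (intro tendsto_mult_right_zero LIMSEQ_power_zero) auto
  show ?thesis
  proof (rule Lim_null_comparison[OF _ q])
    show "\<forall>\<^sub>F n in sequentially. norm (r ^ n * a n) \<le> C * (r / r') ^ n"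
      unfolding eventually_sequentially
    proof (intro exI allI impI)
      fix n assume "n \<ge> N"
      have "norm (r ^ n * a n) = (r / r') ^ n * (r' ^ n * a n)"
        using rr a by (simp add: power_divide)
      also have "\<dots> \<le> (r / r') ^ n * C"
        using N rr \<open>n \<ge> N\<close> by (intro mult_left_mono) auto
      finally show "norm (r ^ n * a n) \<le> C * (r / r') ^ n" by (simp add: mult.commute)
    qed
  qed
qed

lemma power_decay_small_radius:
  fixes x :: "'a::real_normed_algebra_1"
  assumes "0 \<le> r" "r * norm x < 1"
  shows "(\<lambda>n. r ^ n * norm (x ^ n)) \<longlonglongrightarrow> 0"
proof (rule Lim_null_comparison)
  show "(\<lambda>n. (r * norm x) ^ n) \<longlonglongrightarrow> 0" using assms by (intro LIMSEQ_power_zero) auto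
  show "\<forall>\<^sub>F n in sequentially. norm (r ^ n * norm (x ^ n)) \<le> (r * norm x) ^ n"
    using assms(1) by (intro always_eventually allI) (simp add: power_mult_distrib mult_left_mono norm_power_ineq)
qed

lemma stepwise_reach:
  fixes P :: "real \<Rightarrow> bool"
  assumes P0: "P start" and start: "0 < start" "start \<le> R" and d: "d > 0"
    and mono: "\<And>a b. P a \<Longrightarrow> b \<le> a \<Longrightarrow> P b"
    and step: "\<And>a. P a \<Longrightarrow> 0 < a \<Longrightarrow> a \<le> R \<Longrightarrow> P (min R (a + d))"
  shows "P R"
proof -
  have Pk: "P (min R (start + real k * d))" for k
  proof (induction k)
    case 0 show ?case using P0 mono by fastforce
  next
    case (Suc k)
    have "P (min R (min R (start + real k * d) + d))"
      using step[OF Suc] start d by (auto simp: add_pos_nonneg)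
    moreover have "min R (start + real (Suc k) * d) \<le> min R (min R (start + real k * d) + d)"
      using d by (simp add: min_def distrib_right)
    ultimately show ?case by (rule mono)
  qed
  obtain k where "R / d \<le> real k" using real_arch_simple by blast
  hence "R \<le> start + real k * d" using d start by (simp add: divide_le_eq mult.commute)
  thus ?thesis using Pk[of k] by (simp add: min_absorb1)
qed

context cstar begin

text \<open>The set of radii \<open>a\<close> below which \<open>r\<^sup>n\<parallel>x\<^sup>n\<parallel> \<rightarrow> 0\<close> contains a small \<open>a\<^sub>0 > 0\<close> and grows by a fixed
  step (\<open>power_decay_propagates\<close>), so it reaches \<open>R\<close>.\<close>
lemma disc_invertible_power_bound:
  assumes R: "R > 0" and inv: "\<And>\<mu>. cmod \<mu> \<le> R \<Longrightarrow> is_invertible (1 - sc \<mu> x)"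
  shows "\<exists>N. \<forall>n\<ge>N. R ^ n * norm (x ^ n) \<le> 3"
proof -
  obtain L where L: "L > 0" "\<And>n r r'. n \<ge> 1 \<Longrightarrow> 0 \<le> r \<Longrightarrow> r \<le> R \<Longrightarrow> 0 \<le> r' \<Longrightarrow> r' \<le> R \<Longrightarrow>
      norm (root_avg x n r - root_avg x n r') \<le> L * \<bar>r - r'\<bar>"
    using root_avg_lipschitz[where R=R and x=x, OF inv] by blast
  define \<delta> where "\<delta> = 1 / (4 * L)"
  have \<delta>: "\<delta> > 0" unfolding \<delta>_def using L by simp
  have propagate: "\<exists>N. \<forall>n\<ge>N. r1 ^ n * norm (x ^ n) \<le> 3"
    if "0 \<le> s" "s \<le> R" "(\<lambda>n. s ^ n * norm (x ^ n)) \<longlonglongrightarrow> 0" "0 \<le> r1" "r1 \<le> R" "\<bar>r1 - s\<bar> \<le> \<delta>"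
    for s r1
    by (rule power_decay_propagates[where R=R and x=x and L=L]) (use inv L that in \<open>simp_all add: \<delta>_def\<close>)
  define Q where "Q a \<longleftrightarrow> (\<forall>r. 0 \<le> r \<and> r < a \<longrightarrow> (\<lambda>n. r ^ n * norm (x ^ n)) \<longlonglongrightarrow> 0)" for a
  define a0 where "a0 = min R (1 / (norm x + 1))"
  have a0: "a0 > 0" unfolding a0_def using R by (simp add: add_nonneg_pos)
  have Q0: "Q a0" unfolding Q_def
  proof (intro allI impI)
    fix r assume r: "0 \<le> r \<and> r < a0"
    have "r * (norm x + 1) < 1"
      using r unfolding a0_def by (simp add: less_divide_eq add_nonneg_pos)
    hence "r * norm x < 1" using r by (smt (verit) mult_left_mono)
    thus "(\<lambda>n. r ^ n * norm (x ^ n)) \<longlonglongrightarrow> 0" using r power_decay_small_radius by blast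
  qed
  have Qmono: "Q a \<Longrightarrow> b \<le> a \<Longrightarrow> Q b" for a b unfolding Q_def by auto
  have Qstep: "Q (min R (a + \<delta>/2))" if "Q a" "0 < a" "a \<le> R" for a
  proof -
    define s where "s = max 0 (a - \<delta>/2)"
    have s: "0 \<le> s" "s \<le> R" "a - \<delta>/2 \<le> s" "s < a" unfolding s_def using that \<delta> by auto
    have lim: "(\<lambda>n. s ^ n * norm (x ^ n)) \<longlonglongrightarrow> 0" using that(1) s unfolding Q_def by blast
    have r1: "0 \<le> min R (a + \<delta>/2)" "min R (a + \<delta>/2) \<le> R" "\<bar>min R (a + \<delta>/2) - s\<bar> \<le> \<delta>"
      using s that \<delta> by (auto simp: abs_le_iff min_def)
    have bound: "\<exists>N. \<forall>n\<ge>N. min R (a + \<delta>/2) ^ n * norm (x ^ n) \<le> 3"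
      by (rule propagate[OF s(1,2) lim r1])
    show ?thesis unfolding Q_def
      by (intro allI impI power_weighted_null[OF bound]) auto
  qed
  have "a0 \<le> R" "\<delta>/2 > 0" unfolding a0_def using \<delta> by auto
  hence "Q R" using stepwise_reach[where P=Q and start=a0 and R=R and d="\<delta>/2", OF Q0 a0] Qmono Qstep by blast
  moreover have s: "0 \<le> max 0 (R - \<delta>/2)" "max 0 (R - \<delta>/2) \<le> R" "max 0 (R - \<delta>/2) < R"
    using R \<delta> by auto
  ultimately have lim: "(\<lambda>n. (max 0 (R - \<delta>/2)) ^ n * norm (x ^ n)) \<longlonglongrightarrow> 0"
    unfolding Q_def by blast
  have "\<bar>R - max 0 (R - \<delta>/2)\<bar> \<le> \<delta>" using R \<delta> by (auto simp: abs_le_iff)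
  with R show ?thesis by (intro propagate[OF s(1,2) lim]) auto
qed

lemma invertible_disc_of_spectrum:
  assumes "\<And>l. l \<in> cspectrum sc y \<Longrightarrow> cmod l < \<rho>" "\<rho> > 0" "cmod \<mu> \<le> 1 / \<rho>"
  shows "is_invertible (1 - sc \<mu> y)"
proof (cases "\<mu> = 0")
  case True thus ?thesis by (simp add: is_invertible_one)
next
  case False
  have "cmod (1 / \<mu>) \<ge> \<rho>" using assms(2,3) False by (simp add: norm_divide field_simps)
  thus ?thesis using invertible_one_minus_sc_iff[OF False] assms(1) by force
qed

text \<open>A closed disc of invertibility of \<open>1 - \<mu>y\<close> can be enlarged, since the set of such \<open>\<mu>\<close>
  is open and the disc is compact.\<close>
lemma invertible_disc_enlarge:
  assumes r: "r > 0" and inv: "\<And>\<mu>. cmod \<mu> \<le> r \<Longrightarrow> is_invertible (1 - sc \<mu> y)"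
  obtains R where "R > r" "\<And>\<mu>. cmod \<mu> \<le> R \<Longrightarrow> is_invertible (1 - sc \<mu> y)"
proof -
  have "cball 0 r \<subseteq> {\<mu>. is_invertible (1 - sc \<mu> y)}" using inv by auto
  then obtain \<epsilon> where \<epsilon>: "\<epsilon> > 0" "(\<Union>x\<in>cball 0 r. ball x \<epsilon>) \<subseteq> {\<mu>. is_invertible (1 - sc \<mu> y)}"
    using compact_subset_open_imp_ball_epsilon_subset[OF compact_cball resolvent_domain_open] by blast
  have "is_invertible (1 - sc \<mu> y)" if \<mu>: "cmod \<mu> \<le> r + \<epsilon>/2" for \<mu>
  proof (cases "cmod \<mu> \<le> r")
    case True thus ?thesis using inv by blast
  next
    case False
    define \<mu>' where "\<mu>' = complex_of_real (r / cmod \<mu>) * \<mu>"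
    have m0: "cmod \<mu> > 0" using False r by linarith
    have "cmod \<mu>' = r" unfolding \<mu>'_def norm_mult norm_of_real using m0 r by simp
    moreover have "\<mu>' - \<mu> = complex_of_real (r / cmod \<mu> - 1) * \<mu>" unfolding \<mu>'_def
      by (simp add: algebra_simps)
    hence "cmod (\<mu>' - \<mu>) = (1 - r / cmod \<mu>) * cmod \<mu>"
      using False m0 by (simp only: norm_mult norm_of_real) (simp add: abs_if)
    hence "cmod (\<mu>' - \<mu>) < \<epsilon>" using m0 \<mu> \<epsilon>(1) by (simp add: algebra_simps)
    ultimately have "\<mu> \<in> (\<Union>x\<in>cball 0 r. ball x \<epsilon>)" by (auto simp: dist_norm)
    thus ?thesis using \<epsilon>(2) by blast
  qed
  thus ?thesis using that[of "r + \<epsilon>/2"] \<epsilon>(1) by simp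
qed

text \<open>Otherwise \<open>1 - \<mu>y\<close> would be
  invertible on a disc of radius \<open>R > 1/\<parallel>y\<parallel>\<close>, and \<open>R\<^sup>n\<parallel>y\<^sup>n\<parallel> = (R\<parallel>y\<parallel>)\<^sup>n\<close> could not stay bounded.\<close>
lemma sa_spectrum_attains_norm:
  assumes "sa y"
  shows "\<exists>l\<in>cspectrum sc y. cmod l = norm y"
proof (cases "y = 0")
  case True
  have "0 \<in> cspectrum sc y" unfolding spec_iff True using not_is_invertible_zero by simp
  thus ?thesis using True by force
next
  case False
  define ny where "ny = norm y"
  have ny: "ny > 0" using False unfolding ny_def by simp
  show ?thesis
  proof (rule ccontr)
    assume no_norm: "\<not> ?thesis"
    have lt: "cmod l < ny" if "l \<in> cspectrum sc y" for l
    proof -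
      have "cmod l \<noteq> ny" using no_norm that unfolding ny_def by blast
      thus ?thesis using spec_bound[OF that] unfolding ny_def by linarith
    qed
    have inv1: "is_invertible (1 - sc \<mu> y)" if "cmod \<mu> \<le> 1 / ny" for \<mu>
      by (rule invertible_disc_of_spectrum[OF lt ny that])
    have ny': "1 / ny > 0" using ny by simp
    obtain R where R: "R > 1 / ny" "\<And>\<mu>. cmod \<mu> \<le> R \<Longrightarrow> is_invertible (1 - sc \<mu> y)"
      using invertible_disc_enlarge[OF ny' inv1] by blast
    have R0: "R > 0" using R(1) ny by (smt (verit) divide_pos_pos)
    obtain N where N: "\<forall>n\<ge>N. R ^ n * norm (y ^ n) \<le> 3"
      using disc_invertible_power_bound[OF R0 R(2)] by blast
    have Rny: "R * ny > 1" using R(1) ny by (simp add: divide_less_eq)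
    obtain n where n: "3 < (R * ny) ^ n" using real_arch_pow[OF Rny] by blast
    have "(R * ny) ^ n \<le> (R * ny) ^ (n + N)" using Rny by (intro power_increasing) auto
    also have "\<dots> = R ^ (n + N) * norm (y ^ (n + N))"
      using norm_sa_power[OF assms] unfolding ny_def by (simp add: power_mult_distrib)
    also have "\<dots> \<le> 3" using N by simp
    finally show False using n by simp
  qed
qed

text \<open>If \<open>a + ib\<close> is a spectral value of self-adjoint \<open>h\<close>, then \<open>b\<^sup>2 + 2bt \<le> \<parallel>h - a\<parallel>\<^sup>2\<close> for all real
  \<open>t\<close>: \<open>i(b + t)\<close> is a spectral value of \<open>z = (h - a) + it\<close>, so \<open>|b + t| \<le> \<parallel>z\<parallel>\<close>, while the
  C*-identity gives \<open>\<parallel>z\<parallel>\<^sup>2 = \<parallel>(h - a)\<^sup>2 + t\<^sup>2\<parallel> \<le> \<parallel>h - a\<parallel>\<^sup>2 + t\<^sup>2\<close>.\<close>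
lemma spec_imaginary_part_bound:
  assumes h: "sa h" and l: "l \<in> cspectrum sc h"
  shows "(Im l)\<^sup>2 + 2 * Im l * t \<le> (norm (h - of_real (Re l)))\<^sup>2"
proof -
  define a where "a = Re l"
  define b where "b = Im l"
  define u where "u = h - of_real a"
  have stu: "st u = u" using h unfolding u_def sa_def by (simp add: st_diff st_of_real)
  define s where "s = sc (\<i> * complex_of_real t) 1"
  define z where "z = u + s"
  have "z - sc (\<i> * complex_of_real (b + t)) 1 = h - sc l 1"
  proof -
    have "l = complex_of_real a + \<i> * complex_of_real b" unfolding a_def b_def by (simp add: complex_eq)
    hence "sc l 1 = of_real a + sc (\<i> * complex_of_real b) 1" by (simp add: sc_addl sc_of_real)
    moreover have "sc (\<i> * complex_of_real (b + t)) 1 = sc (\<i> * complex_of_real b) 1 + s"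
      unfolding s_def by (simp add: distrib_left sc_addl)
    ultimately show ?thesis unfolding z_def u_def by (simp add: algebra_simps)
  qed
  hence "\<i> * complex_of_real (b + t) \<in> cspectrum sc z" using l unfolding spec_iff by simp
  hence nb0: "cmod (\<i> * complex_of_real (b + t)) \<le> norm z" by (rule spec_bound)
  have nb: "\<bar>b + t\<bar> \<le> norm z" using nb0 by (simp add: norm_mult del: of_real_add)
  have sts: "st s = - s" unfolding s_def by (simp add: st_sc sc_minusl)
  have com: "s * u = u * s" unfolding s_def by (simp add: sc_1l sc_1r)
  have ss: "s * s = - of_real (t\<^sup>2)"
    unfolding s_def sc_11 by (simp add: power2_eq_square sc_minusl sc_of_real[symmetric] mult.commute mult.left_commute)
  have "st z * z = u * u + of_real (t\<^sup>2)"
    unfolding z_def using sts stu com ss by (simp add: st_add algebra_simps)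
  hence "(norm z)\<^sup>2 = norm (u * u + of_real (t\<^sup>2))" using cstar_id[of z] by simp
  also have "\<dots> \<le> norm (u * u) + norm (of_real (t\<^sup>2) :: 'a)" by (rule norm_triangle_ineq)
  also have "\<dots> \<le> (norm u)\<^sup>2 + t\<^sup>2"
    using norm_mult_ineq[of u u] by (simp add: power2_eq_square norm_of_real del: of_real_mult)
  finally have zz: "(norm z)\<^sup>2 \<le> (norm u)\<^sup>2 + t\<^sup>2" .
  have "\<bar>b + t\<bar>\<^sup>2 \<le> (norm z)\<^sup>2" by (rule power_mono[OF nb abs_ge_zero])
  hence "(b + t)\<^sup>2 \<le> (norm u)\<^sup>2 + t\<^sup>2" using zz by simp
  thus ?thesis unfolding a_def b_def u_def by (simp add: power2_eq_square algebra_simps)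
qed

text \<open>Spectra of self-adjoint elements are real: the bound above fails for large \<open>t\<close> (of the
  sign of \<open>b\<close>) unless \<open>b = 0\<close>.\<close>
lemma spec_real:
  assumes h: "sa h" and l: "l \<in> cspectrum sc h"
  shows "Im l = 0"
proof (rule ccontr)
  assume b0: "Im l \<noteq> 0"
  define C where "C = (norm (h - of_real (Re l)))\<^sup>2"
  have "(Im l)\<^sup>2 + 2 * Im l * ((C + 1) / (2 * Im l)) \<le> C"
    unfolding C_def by (rule spec_imaginary_part_bound[OF h l])
  moreover have "2 * Im l * ((C + 1) / (2 * Im l)) = C + 1" using b0 by simp
  ultimately show False by (smt (verit) zero_le_power2)
qed

end

section \<open>Polynomials in an element and the norm estimate on the spectrum\<close>

lemma weierstrass_poly:
  fixes f :: "real \<Rightarrow> real"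
  assumes "compact K" "continuous_on K f" "e > 0"
  shows "\<exists>p. \<forall>t\<in>K. \<bar>f t - poly p t\<bar> < e"
proof -
  obtain g where g: "real_polynomial_function g" "\<And>t. t \<in> K \<Longrightarrow> \<bar>f t - g t\<bar> < e"
    using Stone_Weierstrass_real_polynomial_function[OF assms] by blast
  obtain a n where an: "g = (\<lambda>x. \<Sum>i\<le>n. a i * x ^ i)" using g(1) real_polynomial_function_iff_sum by blast
  define p where "p = (\<Sum>i\<le>n. monom (a i) i)"
  have pg: "poly p t = g t" for t unfolding p_def an by (simp add: poly_sum poly_monom)
  have "\<forall>t\<in>K. \<bar>f t - poly p t\<bar> < e" using g(2) by (simp add: pg)
  thus ?thesis by blast
qed

context cstar begin

definition cpoly_at :: "complex poly \<Rightarrow> 'a \<Rightarrow> 'a" where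
  "cpoly_at q x = (\<Sum>i\<le>degree q. sc (coeff q i) (x ^ i))"

lemma cpoly_at_bound:
  assumes "degree q \<le> N" shows "cpoly_at q x = (\<Sum>i\<le>N. sc (coeff q i) (x ^ i))"
  unfolding cpoly_at_def
proof (rule sum.mono_neutral_cong_left)
  show "\<forall>i\<in>{..N} - {..degree q}. sc (coeff q i) (x ^ i) = 0"
    by (auto simp: coeff_eq_0)
qed (use assms in auto)

lemma cpoly_at_0[simp]: "cpoly_at 0 x = 0" unfolding cpoly_at_def by simp

lemma cpoly_at_pCons: "cpoly_at (pCons a p) x = sc a 1 + x * cpoly_at p x"
proof -
  have "cpoly_at (pCons a p) x = (\<Sum>i\<le>Suc (degree p). sc (coeff (pCons a p) i) (x ^ i))"
    by (rule cpoly_at_bound) simp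
  also have "\<dots> = sc a 1 + (\<Sum>i\<le>degree p. sc (coeff p i) (x ^ Suc i))"
    by (subst sum.atMost_Suc_shift) (simp add: add.commute)
  also have "(\<Sum>i\<le>degree p. sc (coeff p i) (x ^ Suc i)) = x * cpoly_at p x"
    unfolding cpoly_at_def by (simp add: sum_distrib_left sc_multr)
  finally show ?thesis .
qed

lemma cpoly_at_add: "cpoly_at (p + q) x = cpoly_at p x + cpoly_at q x"
proof -
  define N where "N = max (degree p) (degree q)"
  have "cpoly_at (p + q) x = (\<Sum>i\<le>N. sc (coeff (p + q) i) (x ^ i))"
    by (rule cpoly_at_bound) (simp add: N_def degree_add_le)
  also have "\<dots> = (\<Sum>i\<le>N. sc (coeff p i) (x ^ i)) + (\<Sum>i\<le>N. sc (coeff q i) (x ^ i))"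
    by (simp add: sc_addl sum.distrib)
  also have "\<dots> = cpoly_at p x + cpoly_at q x"
    using cpoly_at_bound[of p N x] cpoly_at_bound[of q N x] by (simp add: N_def)
  finally show ?thesis .
qed

lemma cpoly_at_smult: "cpoly_at (smult c p) x = sc c (cpoly_at p x)"
proof -
  have "cpoly_at (smult c p) x = (\<Sum>i\<le>degree p. sc (coeff (smult c p) i) (x ^ i))"
    by (rule cpoly_at_bound) (rule degree_smult_le)
  thus ?thesis unfolding cpoly_at_def by (simp add: sc_sum sc_assoc)
qed

lemma cpoly_at_mult: "cpoly_at (p * q) x = cpoly_at p x * cpoly_at q x"
proof (induction p)
  case 0 thus ?case by simp
next
  case (pCons a p)
  have "cpoly_at (pCons a p * q) x = sc a (cpoly_at q x) + x * cpoly_at (p * q) x"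
    using cpoly_at_pCons[of 0 "p * q" x] by (simp add: cpoly_at_add cpoly_at_smult)
  also have "\<dots> = cpoly_at (pCons a p) x * cpoly_at q x"
    using pCons.IH by (simp add: cpoly_at_pCons distrib_right sc_1l mult.assoc)
  finally show ?case .
qed

lemma cpoly_at_const: "cpoly_at [:c:] x = sc c 1"
  using cpoly_at_pCons[of c 0 x] by simp

lemma cpoly_at_lin: "cpoly_at [:- z, 1:] x = x - sc z 1"
  using cpoly_at_pCons[of "-z" "[:1:]" x] by (simp add: cpoly_at_const sc_minusl)

text \<open>Spectral mapping, one direction: if \<open>x - z\<close> is invertible at every root \<open>z\<close> of \<open>q\<close>, then
  \<open>q(x)\<close> is invertible (factor \<open>q\<close> into linear factors by the fundamental theorem of algebra).\<close>
lemma poly_inv: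
  assumes "q \<noteq> 0" "\<And>z. poly q z = 0 \<Longrightarrow> is_invertible (x - sc z 1)"
  shows "is_invertible (cpoly_at q x)"
  using assms
proof (induction "degree q" arbitrary: q rule: less_induct)
  case less
  show ?case
  proof (cases "degree q = 0")
    case True
    then obtain c where c: "q = [:c:]" using degree_eq_zeroE by blast
    hence "c \<noteq> 0" using less by simp
    thus ?thesis unfolding c cpoly_at_const by (rule is_invertible_sc1)
  next
    case False
    hence "\<not> constant (poly q)" by (simp add: constant_degree)
    then obtain z where z: "poly q z = 0" using fundamental_theorem_of_algebra by blast
    hence "[:- z, 1:] dvd q" by (simp add: dvd_iff_poly_eq_0)
    then obtain r where r: "q = [:- z, 1:] * r" by (rule dvdE)
    have r0: "r \<noteq> 0" using less r by auto
    have "degree ([:- z, 1:] * r) = degree [:- z, 1:] + degree r" by (rule degree_mult_eq) (use r0 in auto)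
    hence "degree q = 1 + degree r" unfolding r by simp
    hence dr: "degree r < degree q" by simp
    have "is_invertible (cpoly_at r x)"
    proof (rule less.hyps[OF dr r0])
      fix w assume "poly r w = 0"
      hence "poly q w = 0" unfolding r by simp
      thus "is_invertible (x - sc w 1)" by (rule less.prems)
    qed
    moreover have "is_invertible (x - sc z 1)" using less.prems z by blast
    ultimately show ?thesis unfolding r cpoly_at_mult cpoly_at_lin by (intro is_invertible_mult)
  qed
qed

definition rpoly_at :: "real poly \<Rightarrow> 'a \<Rightarrow> 'a" where
  "rpoly_at p x = (\<Sum>i\<le>degree p. coeff p i *\<^sub>R (x ^ i))"

lemma rpoly_at_C: "rpoly_at p x = cpoly_at (map_poly complex_of_real p) x"
proof -
  have d: "degree (map_poly complex_of_real p) = degree p" by (rule degree_map_poly) simp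
  show ?thesis unfolding rpoly_at_def cpoly_at_def d by (simp add: coeff_map_poly sc_real)
qed

lemma poly_of_real: "poly (map_poly complex_of_real p) (complex_of_real t) = complex_of_real (poly p t)"
  by (induction p) (auto simp: map_poly_pCons)

lemma rpoly_at_bound:
  assumes "degree q \<le> N" shows "rpoly_at q x = (\<Sum>i\<le>N. coeff q i *\<^sub>R (x ^ i))"
  unfolding rpoly_at_def
proof (rule sum.mono_neutral_cong_left)
  show "\<forall>i\<in>{..N} - {..degree q}. coeff q i *\<^sub>R (x ^ i) = 0"
    by (auto simp: coeff_eq_0)
qed (use assms in auto)

lemma rpoly_at_0[simp]: "rpoly_at 0 x = 0" unfolding rpoly_at_def by simp

lemma rpoly_at_pCons: "rpoly_at (pCons a p) x = of_real a + x * rpoly_at p x"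
proof -
  have "rpoly_at (pCons a p) x = (\<Sum>i\<le>Suc (degree p). coeff (pCons a p) i *\<^sub>R (x ^ i))"
    by (rule rpoly_at_bound) simp
  also have "\<dots> = of_real a + (\<Sum>i\<le>degree p. coeff p i *\<^sub>R (x ^ Suc i))"
    by (subst sum.atMost_Suc_shift) (simp add: add.commute of_real_def)
  also have "(\<Sum>i\<le>degree p. coeff p i *\<^sub>R (x ^ Suc i)) = x * rpoly_at p x"
    unfolding rpoly_at_def by (simp add: sum_distrib_left mult_scaleR_right)
  finally show ?thesis .
qed

lemma rpoly_at_add: "rpoly_at (p + q) x = rpoly_at p x + rpoly_at q x"
proof -
  define N where "N = max (degree p) (degree q)"
  have "rpoly_at (p + q) x = (\<Sum>i\<le>N. coeff (p + q) i *\<^sub>R (x ^ i))"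
    by (rule rpoly_at_bound) (simp add: N_def degree_add_le)
  also have "\<dots> = (\<Sum>i\<le>N. coeff p i *\<^sub>R (x ^ i)) + (\<Sum>i\<le>N. coeff q i *\<^sub>R (x ^ i))"
    by (simp add: scaleR_add_left sum.distrib)
  also have "\<dots> = rpoly_at p x + rpoly_at q x"
    using rpoly_at_bound[of p N x] rpoly_at_bound[of q N x] by (simp add: N_def)
  finally show ?thesis .
qed

lemma rpoly_at_smult: "rpoly_at (smult c p) x = c *\<^sub>R rpoly_at p x"
proof -
  have "rpoly_at (smult c p) x = (\<Sum>i\<le>degree p. coeff (smult c p) i *\<^sub>R (x ^ i))"
    by (rule rpoly_at_bound) (rule degree_smult_le)
  thus ?thesis unfolding rpoly_at_def by (simp add: scaleR_sum_right)
qed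

lemma rpoly_at_mult: "rpoly_at (p * q) x = rpoly_at p x * rpoly_at q x"
proof (induction p)
  case 0 thus ?case by simp
next
  case (pCons a p)
  have "rpoly_at (pCons a p * q) x = a *\<^sub>R (rpoly_at q x) + x * rpoly_at (p * q) x"
    using rpoly_at_pCons[of 0 "p * q" x] by (simp add: rpoly_at_add rpoly_at_smult)
  also have "\<dots> = rpoly_at (pCons a p) x * rpoly_at q x"
    using pCons.IH by (simp add: rpoly_at_pCons distrib_right mult.assoc scaleR_conv_of_real)
  finally show ?case .
qed

lemma rpoly_at_const: "rpoly_at [:c:] x = of_real c"
  using rpoly_at_pCons[of c 0 x] by simp

lemma rpoly_at_X: "rpoly_at [:0, 1:] x = x"
  using rpoly_at_pCons[of 0 "[:1:]" x] by (simp add: rpoly_at_const)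

lemma rpoly_at_diff: "rpoly_at (p - q) x = rpoly_at p x - rpoly_at q x"
  using rpoly_at_add[of "p - q" q x] by simp

lemma rpoly_at_sa: "sa x \<Longrightarrow> sa (rpoly_at p x)"
  unfolding rpoly_at_def sa_def by (simp add: st_sum st_scaleR st_power)

text \<open>The real part of the spectrum; for self-adjoint elements this is the whole spectrum.\<close>
definition rspec :: "'a \<Rightarrow> real set" where "rspec x = {t. complex_of_real t \<in> cspectrum sc x}"

lemma rspec_bound: "t \<in> rspec x \<Longrightarrow> \<bar>t\<bar> \<le> norm x"
  using spec_bound[of "complex_of_real t" x] by (simp add: rspec_def)

lemma rspec_compact: "compact (rspec x)"
proof -
  have eq: "rspec x = complex_of_real -` cspectrum sc x" unfolding rspec_def by auto
  have "closed (rspec x)" unfolding eq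
    by (rule continuous_closed_vimage[OF spec_closed]) (intro continuous_intros)
  moreover have "bounded (rspec x)" unfolding bounded_iff using rspec_bound by auto
  ultimately show ?thesis by (simp add: compact_eq_bounded_closed)
qed


lemma spec_sa_real: assumes "sa x" "l \<in> cspectrum sc x" shows "l = complex_of_real (Re l) \<and> Re l \<in> rspec x"
proof -
  have e: "l = complex_of_real (Re l)" using spec_real[OF assms] by (simp add: complex_eq_iff)
  hence "complex_of_real (Re l) \<in> cspectrum sc x" using assms(2) by simp
  thus ?thesis using e unfolding rspec_def by simp
qed

lemma rspec_nonempty: "sa x \<Longrightarrow> rspec x \<noteq> {}"
  using sa_spectrum_attains_norm[of x] spec_sa_real by blast

text \<open>Otherwise \<open>p - r\<close>, which is not constant, has
  only roots \<open>z\<close> with \<open>x - z\<close> invertible, so \<open>p(x) - r\<close> would be invertible by \<open>poly_inv\<close>.\<close>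
lemma rpoly_spectral_mapping:
  assumes x: "sa x" and r: "complex_of_real r \<in> cspectrum sc (rpoly_at p x)"
  shows "\<exists>t\<in>rspec x. poly p t = r"
proof (rule ccontr)
  assume H: "\<not> ?thesis"
  define q where "q = map_poly complex_of_real p - [:complex_of_real r:]"
  have q0: "q \<noteq> 0"
  proof
    assume "q = 0"
    hence "poly (map_poly complex_of_real p) z = complex_of_real r" for z unfolding q_def by simp
    moreover obtain t where "t \<in> rspec x" using rspec_nonempty[OF x] by blast
    ultimately show False using poly_of_real[of p t] H by auto
  qed
  have "is_invertible (cpoly_at q x)"
  proof (rule poly_inv[OF q0])
    fix z assume z: "poly q z = 0"
    show "is_invertible (x - sc z 1)"
    proof (rule ccontr)
      assume "\<not> is_invertible (x - sc z 1)"
      hence zr: "z = complex_of_real (Re z)" "Re z \<in> rspec x" using spec_sa_real[OF x] by (auto simp: spec_iff)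
      have "poly (map_poly complex_of_real p) z = complex_of_real r" using z unfolding q_def by simp
      hence "poly p (Re z) = r" using poly_of_real[of p "Re z"] zr by (metis of_real_eq_iff)
      thus False using H zr by auto
    qed
  qed
  moreover have "cpoly_at q x = rpoly_at p x - sc (complex_of_real r) 1"
  proof -
    have qa: "q + [:complex_of_real r:] = map_poly complex_of_real p" unfolding q_def by (rule diff_add_cancel)
    have "cpoly_at (map_poly complex_of_real p) x = cpoly_at q x + sc (complex_of_real r) 1"
      using cpoly_at_add[of q "[:complex_of_real r:]" x] unfolding qa cpoly_at_const .
    thus ?thesis unfolding rpoly_at_C by (simp add: eq_diff_eq)
  qed
  ultimately show False using r spec_iff by simp
qed

text \<open>Indeed \<open>p(x)\<close> is self-adjoint,
  so it has a (real) spectral value \<open>l\<close> with \<open>|l| = \<parallel>p(x)\<parallel>\<close>, and \<open>l = p(t)\<close> with \<open>t \<in> \<sigma>(x)\<close>.\<close>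
lemma rpoly_norm_le:
  assumes x: "sa x" and M: "\<And>t. t \<in> rspec x \<Longrightarrow> \<bar>poly p t\<bar> \<le> M"
  shows "norm (rpoly_at p x) \<le> M"
proof -
  have sy: "sa (rpoly_at p x)" using rpoly_at_sa[OF x] .
  obtain l where l: "l \<in> cspectrum sc (rpoly_at p x)" "cmod l = norm (rpoly_at p x)"
    using sa_spectrum_attains_norm[OF sy] by blast
  have lr: "l = complex_of_real (Re l)" using spec_sa_real[OF sy l(1)] by blast
  then obtain t where t: "t \<in> rspec x" "poly p t = Re l"
    using rpoly_spectral_mapping[OF x, of "Re l" p] l(1) by auto
  have "norm (rpoly_at p x) = \<bar>Re l\<bar>" using l(2) lr by (metis norm_of_real)
  thus ?thesis using M[OF t(1)] t(2) by simp
qed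

lemma rpoly_norm_diff_le:
  assumes "sa x" "\<And>t. t \<in> rspec x \<Longrightarrow> \<bar>poly p t - poly q t\<bar> \<le> M"
  shows "norm (rpoly_at p x - rpoly_at q x) \<le> M"
  using rpoly_norm_le[OF assms(1), of "p - q" M] assms(2) by (simp add: rpoly_at_diff)

text \<open>Continuous functional calculus. \<open>cfc_limit x f y\<close> says that \<open>y\<close> is approximated by \<open>p(x)\<close>
  as well as \<open>f\<close> is approximated by \<open>p\<close> uniformly on the spectrum; by the norm estimate and
  Weierstrass such \<open>y\<close> exists and is unique for continuous \<open>f\<close>, and \<open>f(x) = cfc x f\<close> is this \<open>y\<close>.\<close>
definition cfc_limit :: "'a \<Rightarrow> (real \<Rightarrow> real) \<Rightarrow> 'a \<Rightarrow> bool" where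
  "cfc_limit x f y \<longleftrightarrow> (\<forall>e>0. \<forall>p. (\<forall>t\<in>rspec x. \<bar>f t - poly p t\<bar> \<le> e) \<longrightarrow> norm (y - rpoly_at p x) \<le> e)"

definition cfc :: "'a \<Rightarrow> (real \<Rightarrow> real) \<Rightarrow> 'a" where
  "cfc x f = (THE y. cfc_limit x f y)"

text \<open>Uniqueness of \<open>cfc_limit\<close>: two candidates are within \<open>e\<close> of a common \<open>p(x)\<close>.\<close>
lemma cfc_limit_unique:
  assumes x: "sa x" and f: "continuous_on (rspec x) f" and y: "cfc_limit x f y" and y': "cfc_limit x f y'"
  shows "y = y'"
proof -
  have "norm (y - y') \<le> 0 + e" if e: "e > 0" for e
  proof -
    have e2: "e/2 > 0" using e by simp
    obtain p where p: "\<forall>t\<in>rspec x. \<bar>f t - poly p t\<bar> < e/2" using weierstrass_poly[OF rspec_compact f e2] by blast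
    hence p': "\<forall>t\<in>rspec x. \<bar>f t - poly p t\<bar> \<le> e/2" by (simp add: less_imp_le)
    have "norm (y - rpoly_at p x) \<le> e/2" "norm (y' - rpoly_at p x) \<le> e/2"
      using y y' e2 p' unfolding cfc_limit_def by blast+
    thus ?thesis using norm_triangle_ineq4[of "y - rpoly_at p x" "y' - rpoly_at p x"] by simp
  qed
  hence "norm (y - y') \<le> 0" by (rule field_le_epsilon)
  thus ?thesis by simp
qed

text \<open>Existence: for polynomials \<open>P\<^sub>k\<close> with \<open>|f - P\<^sub>k| < 1/(k+1)\<close> on the spectrum, the elements
  \<open>P\<^sub>k(x)\<close> form a Cauchy sequence by the norm estimate; its limit is the desired element.\<close>
lemma cfc_limit_exists:
  assumes x: "sa x" and f: "continuous_on (rspec x) f"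
  shows "\<exists>y. cfc_limit x f y"
proof -
  have "\<forall>k::nat. \<exists>p. \<forall>t\<in>rspec x. \<bar>f t - poly p t\<bar> < 1 / real (Suc k)"
    using weierstrass_poly[OF rspec_compact f] by simp
  then obtain P where P: "\<And>k t. t \<in> rspec x \<Longrightarrow> \<bar>f t - poly (P k) t\<bar> < 1 / real (Suc k)" by metis
  define Y where "Y k = rpoly_at (P k) x" for k
  have dist: "norm (Y k - rpoly_at p x) \<le> 1 / real (Suc k) + e"
    if "\<forall>t\<in>rspec x. \<bar>f t - poly p t\<bar> \<le> e" for k p e
    unfolding Y_def
  proof (rule rpoly_norm_diff_le[OF x])
    fix t assume t: "t \<in> rspec x"
    have a: "\<bar>f t - poly p t\<bar> \<le> e" using that t by blast
    have b: "\<bar>f t - poly (P k) t\<bar> < 1 / real (Suc k)" using P[OF t] by blast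
    show "\<bar>poly (P k) t - poly p t\<bar> \<le> 1 / real (Suc k) + e"
      using a b by arith
  qed
  have "Cauchy Y"
  proof (unfold Cauchy_iff, intro allI impI)
    fix e :: real assume e: "e > 0"
    obtain M where M0: "inverse (real (Suc M)) < e / 2" using reals_Archimedean[of "e/2"] e by auto
    hence M: "1 / real (Suc M) < e / 2" by (simp add: inverse_eq_divide)
    have "norm (Y m - Y n) < e" if "m \<ge> M" "n \<ge> M" for m n
    proof -
      have bn: "\<forall>t\<in>rspec x. \<bar>f t - poly (P n) t\<bar> \<le> 1 / real (Suc n)" using P by (auto intro: less_imp_le)
      have "norm (Y m - Y n) \<le> 1 / real (Suc m) + 1 / real (Suc n)"
        using dist[OF bn, of m] unfolding Y_def[of n] .
      also have "1 / real (Suc m) \<le> 1 / real (Suc M)" using that by (simp add: frac_le)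
      also have "1 / real (Suc n) \<le> 1 / real (Suc M)" using that by (simp add: frac_le)
      finally show ?thesis using M by simp
    qed
    thus "\<exists>M. \<forall>m\<ge>M. \<forall>n\<ge>M. norm (Y m - Y n) < e" by blast
  qed
  then obtain y where y: "Y \<longlonglongrightarrow> y" using Cauchy_convergent_iff convergent_def by blast
  have "cfc_limit x f y" unfolding cfc_limit_def
  proof (intro allI impI)
    fix e p assume e: "e > 0" and p: "\<forall>t\<in>rspec x. \<bar>f t - poly p t\<bar> \<le> e"
    have l1: "(\<lambda>k. norm (Y k - rpoly_at p x)) \<longlonglongrightarrow> norm (y - rpoly_at p x)"
      by (intro tendsto_intros y)
    have l2: "(\<lambda>k. 1 / real (Suc k) + e) \<longlonglongrightarrow> 0 + e"
      by (intro tendsto_intros LIMSEQ_Suc[OF lim_const_over_n] )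
    show "norm (y - rpoly_at p x) \<le> e"
      using LIMSEQ_le[OF l1 l2] dist[OF p] by auto
  qed
  thus ?thesis by blast
qed

lemma cfc_is_limit: "sa x \<Longrightarrow> continuous_on (rspec x) f \<Longrightarrow> cfc_limit x f (cfc x f)"
proof -
  assume x: "sa x" and f: "continuous_on (rspec x) f"
  obtain y where y: "cfc_limit x f y" using cfc_limit_exists[OF x f] by blast
  show "cfc_limit x f (cfc x f)" unfolding cfc_def
    by (rule theI[of "cfc_limit x f", OF y]) (rule cfc_limit_unique[OF x f _ y])
qed

lemma cfc_eqI:
  assumes x: "sa x" and f: "continuous_on (rspec x) f"
    and ap: "\<And>d. d > 0 \<Longrightarrow> \<exists>p. (\<forall>t\<in>rspec x. \<bar>f t - poly p t\<bar> \<le> d) \<and> norm (y - rpoly_at p x) \<le> d"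
  shows "cfc x f = y"
proof -
  have "cfc_limit x f y" unfolding cfc_limit_def
  proof (intro allI impI)
    fix e p assume e: "e > 0" and p: "\<forall>t\<in>rspec x. \<bar>f t - poly p t\<bar> \<le> e"
    have H: "norm (y - rpoly_at p x) \<le> e + 2 * d" if d: "d > 0" for d
    proof -
      obtain q where q: "\<forall>t\<in>rspec x. \<bar>f t - poly q t\<bar> \<le> d" "norm (y - rpoly_at q x) \<le> d" using ap[OF d] by blast
      have "norm (rpoly_at q x - rpoly_at p x) \<le> d + e"
      proof (rule rpoly_norm_diff_le[OF x])
        fix t assume t: "t \<in> rspec x"
        have a: "\<bar>f t - poly p t\<bar> \<le> e" using p t by blast
        have b: "\<bar>f t - poly q t\<bar> \<le> d" using q t by blast
        show "\<bar>poly q t - poly p t\<bar> \<le> d + e" using a b by arith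
      qed
      thus ?thesis using q(2) norm_triangle_ineq[of "y - rpoly_at q x" "rpoly_at q x - rpoly_at p x"] by simp
    qed
    have "norm (y - rpoly_at p x) \<le> e + d" if "d > 0" for d using H[of "d/2"] that by simp
    thus "norm (y - rpoly_at p x) \<le> e" by (rule field_le_epsilon)
  qed
  thus ?thesis using cfc_limit_unique[OF x f] cfc_is_limit[OF x f] by metis
qed

lemma cfc_approx:
  assumes "sa x" "continuous_on (rspec x) f" "d > 0"
  shows "\<exists>p. (\<forall>t\<in>rspec x. \<bar>f t - poly p t\<bar> \<le> d) \<and> norm (cfc x f - rpoly_at p x) \<le> d"
proof -
  obtain p where "\<forall>t\<in>rspec x. \<bar>f t - poly p t\<bar> < d" using weierstrass_poly[OF rspec_compact assms(2,3)] by blast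
  hence p: "\<forall>t\<in>rspec x. \<bar>f t - poly p t\<bar> \<le> d" by (auto intro: less_imp_le)
  thus ?thesis using cfc_is_limit[OF assms(1,2)] assms(3) unfolding cfc_limit_def by blast
qed

lemma cfc_cong:
  assumes "\<And>t. t \<in> rspec x \<Longrightarrow> f t = g t"
  shows "cfc x f = cfc x g"
proof -
  have "cfc_limit x f = cfc_limit x g" unfolding cfc_limit_def[abs_def] using assms by (intro ext) auto
  thus ?thesis unfolding cfc_def by simp
qed

lemma cfc_poly: "sa x \<Longrightarrow> cfc x (poly p) = rpoly_at p x"
  by (rule cfc_eqI) (auto intro!: exI[of _ p] continuous_intros)

lemma cfc_const: "sa x \<Longrightarrow> cfc x (\<lambda>_. c) = of_real c"
proof -
  have "poly [:c:] = (\<lambda>_. c)" by (rule ext) simp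
  thus "sa x \<Longrightarrow> cfc x (\<lambda>_. c) = of_real c" using cfc_poly[of x "[:c:]"] by (simp add: rpoly_at_const)
qed

lemma cfc_id: "sa x \<Longrightarrow> cfc x (\<lambda>t. t) = x"
proof -
  have "poly [:0, 1:] = (\<lambda>t::real. t)" by (simp add: fun_eq_iff)
  thus "sa x \<Longrightarrow> cfc x (\<lambda>t. t) = x" using cfc_poly[of x "[:0, 1:]"] by (simp add: rpoly_at_X)
qed

lemma cfc_dist:
  assumes x: "sa x" and f: "continuous_on (rspec x) f" and g: "continuous_on (rspec x) g"
    and d: "\<And>t. t \<in> rspec x \<Longrightarrow> \<bar>f t - g t\<bar> \<le> D"
  shows "norm (cfc x f - cfc x g) \<le> D"
proof -
  have H: "norm (cfc x f - cfc x g) \<le> D + 2 * e" if e: "e > 0" for e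
  proof -
    obtain p where p: "\<forall>t\<in>rspec x. \<bar>f t - poly p t\<bar> \<le> e" "norm (cfc x f - rpoly_at p x) \<le> e"
      using cfc_approx[OF x f e] by blast
    have gp: "\<forall>t\<in>rspec x. \<bar>g t - poly p t\<bar> \<le> D + e"
    proof
      fix t assume t: "t \<in> rspec x"
      have a: "\<bar>f t - poly p t\<bar> \<le> e" using p(1) t by blast
      show "\<bar>g t - poly p t\<bar> \<le> D + e" using a d[OF t] by arith
    qed
    obtain t0 where "t0 \<in> rspec x" using rspec_nonempty[OF x] by blast
    hence "D \<ge> 0" using d[of t0] by (meson abs_ge_zero order_trans)
    hence De: "D + e > 0" using e by simp
    have "norm (cfc x g - rpoly_at p x) \<le> D + e" using cfc_is_limit[OF x g] De gp unfolding cfc_limit_def by blast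
    thus ?thesis using p(2) norm_triangle_ineq4[of "cfc x f - rpoly_at p x" "cfc x g - rpoly_at p x"] by simp
  qed
  have "norm (cfc x f - cfc x g) \<le> D + e" if "e > 0" for e using H[of "e/2"] that by simp
  thus ?thesis by (rule field_le_epsilon)
qed

end

section \<open>Algebraic properties of the functional calculus\<close>

lemma norm_mult_approx:
  fixes a b c e :: "'b::real_normed_algebra"
  assumes "norm a \<le> B" "norm e \<le> B + \<eta>" "norm (a - c) \<le> \<eta>" "norm (b - e) \<le> \<eta>" "0 \<le> \<eta>" "\<eta> \<le> 1"
  shows "norm (a * b - c * e) \<le> \<eta> * (2 * B + 1)"
proof -
  have "a * b - c * e = a * (b - e) + (a - c) * e" by (simp add: algebra_simps)
  hence "norm (a * b - c * e) \<le> norm a * norm (b - e) + norm (a - c) * norm e"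
    by (metis norm_triangle_le norm_mult_ineq add_mono)
  also have "\<dots> \<le> B * \<eta> + \<eta> * (B + \<eta>)"
    using assms by (intro add_mono mult_mono) (auto intro: order_trans[OF norm_ge_zero])
  also have "\<dots> \<le> \<eta> * (2 * B + 1)" using assms by (simp add: algebra_simps mult_left_le)
  finally show ?thesis .
qed

text \<open>Local division: near a point where \<open>g \<noteq> 0\<close> one can divide by \<open>g\<close>. Precisely, there are
  continuous \<open>r\<close> and \<open>\<rho>\<close> such that \<open>1 - (t - t\<^sub>0)\<^sup>2r(t) = \<rho>(t)g(t)\<close>; the left side vanishes for
  \<open>|t - t\<^sub>0| \<ge> \<delta>/2\<close>, and on \<open>|t - t\<^sub>0| < \<delta>/2\<close> we have \<open>|g| > |g(t\<^sub>0)|/2\<close>.\<close>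
lemma local_division:
  fixes g :: "real \<Rightarrow> real"
  assumes g: "continuous_on K g" and t0: "t0 \<in> K" and g0: "g t0 \<noteq> 0"
  obtains r \<rho> where "continuous_on K r" "continuous_on K \<rho>"
    "\<And>t. t \<in> K \<Longrightarrow> 1 - (t - t0)\<^sup>2 * r t = \<rho> t * g t"
proof -
  define c where "c = \<bar>g t0\<bar>"
  have c: "c > 0" using g0 unfolding c_def by simp
  obtain \<delta> where \<delta>: "\<delta> > 0" "\<And>t. t \<in> K \<Longrightarrow> dist t t0 < \<delta> \<Longrightarrow> dist (g t) (g t0) < c/2"
    using g t0 c unfolding continuous_on_iff by (meson half_gt_zero)
  define r where "r t = 1 / max ((t - t0)\<^sup>2) (\<delta>\<^sup>2 / 4)" for t
  define \<psi> where "\<psi> t = 1 - (t - t0)\<^sup>2 * r t" for t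
  define \<rho> where "\<rho> t = \<psi> t * g t / max ((g t)\<^sup>2) (c\<^sup>2 / 4)" for t
  have mpos: "max ((t - t0)\<^sup>2) (\<delta>\<^sup>2 / 4) > 0" for t using \<delta> by (simp add: less_max_iff_disj)
  have mpos2: "max ((g t)\<^sup>2) (c\<^sup>2 / 4) > 0" for t using c by (simp add: less_max_iff_disj)
  have mne: "max ((t - t0)\<^sup>2) (\<delta>\<^sup>2 / 4) \<noteq> 0" for t using mpos[of t] by linarith
  have mne2: "max ((g t)\<^sup>2) (c\<^sup>2 / 4) \<noteq> 0" for t using mpos2[of t] by linarith
  have cr: "continuous_on (K) r" unfolding r_def using mne
    by (intro continuous_intros) auto
  have c\<psi>: "continuous_on (K) \<psi>" unfolding \<psi>_def using cr by (intro continuous_intros)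
  have c\<rho>: "continuous_on (K) \<rho>" unfolding \<rho>_def using c\<psi> g mne2
    by (intro continuous_intros) auto
  have \<psi>\<rho>: "\<psi> t = \<rho> t * g t" if t: "t \<in> K" for t
  proof (cases "(t - t0)\<^sup>2 < \<delta>\<^sup>2 / 4")
    case True
    have eqd: "(\<delta> / 2)\<^sup>2 = \<delta>\<^sup>2 / 4" by (simp add: power_divide)
    have "\<bar>t - t0\<bar>\<^sup>2 < (\<delta> / 2)\<^sup>2" using True unfolding eqd power2_abs .
    hence "\<bar>t - t0\<bar> < \<delta> / 2" by (rule power2_less_imp_less) (use \<delta> in simp)
    hence "dist t t0 < \<delta>" unfolding dist_real_def by linarith
    hence "dist (g t) (g t0) < c/2" by (rule \<delta>(2)[OF t])
    hence "\<bar>g t - g t0\<bar> < c/2" unfolding dist_real_def .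
    hence gt: "\<bar>g t\<bar> > c/2" unfolding c_def by arith
    have "(c/2)\<^sup>2 < \<bar>g t\<bar>\<^sup>2" by (rule power_strict_mono[OF gt]) (use c in auto)
    hence "(g t)\<^sup>2 > (c/2)\<^sup>2" by simp
    hence m: "max ((g t)\<^sup>2) (c\<^sup>2 / 4) = (g t)\<^sup>2" by (simp add: power_divide)
    have "g t \<noteq> 0" using gt c by auto
    thus ?thesis unfolding \<rho>_def m by (simp add: power2_eq_square)
  next
    case False
    hence "r t = 1 / (t - t0)\<^sup>2" unfolding r_def by simp
    moreover have "(t - t0)\<^sup>2 \<noteq> 0" using False \<delta> by auto
    ultimately have "\<psi> t = 0" unfolding \<psi>_def by simp
    thus ?thesis unfolding \<rho>_def by simp
  qed
  show ?thesis using that[OF cr c\<rho>] \<psi>\<rho> unfolding \<psi>_def by blast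
qed

context cstar begin

lemma rspec_function_bounded:
  fixes f :: "real \<Rightarrow> real"
  assumes "continuous_on (rspec x) f"
  obtains B where "B > 0" "\<And>t. t \<in> rspec x \<Longrightarrow> \<bar>f t\<bar> \<le> B"
proof -
  have "bounded (f ` rspec x)" by (rule compact_imp_bounded[OF compact_continuous_image[OF assms rspec_compact]])
  then obtain B where "B > 0" "\<forall>y\<in>f ` rspec x. norm y \<le> B" unfolding bounded_pos by blast
  thus ?thesis using that by auto
qed

lemma cfc_add:
  assumes x: "sa x" and f: "continuous_on (rspec x) f" and g: "continuous_on (rspec x) g"
  shows "cfc x (\<lambda>t. f t + g t) = cfc x f + cfc x g"
proof (rule cfc_eqI[OF x])
  show "continuous_on (rspec x) (\<lambda>t. f t + g t)" using f g by (intro continuous_intros)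
  fix d :: real assume d: "d > 0"
  hence d2: "d/2 > 0" by simp
  obtain p where p: "\<forall>t\<in>rspec x. \<bar>f t - poly p t\<bar> \<le> d/2" "norm (cfc x f - rpoly_at p x) \<le> d/2"
    using cfc_approx[OF x f d2] by blast
  obtain q where q: "\<forall>t\<in>rspec x. \<bar>g t - poly q t\<bar> \<le> d/2" "norm (cfc x g - rpoly_at q x) \<le> d/2"
    using cfc_approx[OF x g d2] by blast
  have "\<forall>t\<in>rspec x. \<bar>f t + g t - poly (p + q) t\<bar> \<le> d"
  proof
    fix t assume t: "t \<in> rspec x"
    have a: "\<bar>f t - poly p t\<bar> \<le> d/2" "\<bar>g t - poly q t\<bar> \<le> d/2" using p(1) q(1) t by blast+
    have "\<bar>f t + g t - poly (p + q) t\<bar> = \<bar>(f t - poly p t) + (g t - poly q t)\<bar>"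
      by (simp add: poly_add algebra_simps)
    also have "\<dots> \<le> \<bar>f t - poly p t\<bar> + \<bar>g t - poly q t\<bar>" by (rule abs_triangle_ineq)
    finally show "\<bar>f t + g t - poly (p + q) t\<bar> \<le> d" using a by simp
  qed
  moreover have "norm (cfc x f + cfc x g - rpoly_at (p + q) x) \<le> d"
  proof -
    have "cfc x f + cfc x g - rpoly_at (p + q) x = (cfc x f - rpoly_at p x) + (cfc x g - rpoly_at q x)"
      by (simp add: rpoly_at_add)
    hence "norm (cfc x f + cfc x g - rpoly_at (p + q) x) \<le> norm (cfc x f - rpoly_at p x) + norm (cfc x g - rpoly_at q x)"
      by (simp only: norm_triangle_ineq)
    thus ?thesis using p(2) q(2) by simp
  qed
  ultimately show "\<exists>p. (\<forall>t\<in>rspec x. \<bar>f t + g t - poly p t\<bar> \<le> d) \<and> norm (cfc x f + cfc x g - rpoly_at p x) \<le> d"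
    by blast
qed

lemma cfc_scale:
  assumes x: "sa x" and f: "continuous_on (rspec x) f"
  shows "cfc x (\<lambda>t. c * f t) = c *\<^sub>R cfc x f"
proof (rule cfc_eqI[OF x])
  show "continuous_on (rspec x) (\<lambda>t. c * f t)" using f by (intro continuous_intros)
  fix d :: real assume d: "d > 0"
  define \<eta> where "\<eta> = d / (\<bar>c\<bar> + 1)"
  have c1: "\<bar>c\<bar> + 1 > 0" by (simp add: add_nonneg_pos)
  have \<eta>: "\<eta> > 0" unfolding \<eta>_def using d c1 by simp
  have c\<eta>: "\<bar>c\<bar> * \<eta> \<le> d"
  proof -
    have "\<bar>c\<bar> * \<eta> \<le> (\<bar>c\<bar> + 1) * \<eta>" using \<eta> by (intro mult_right_mono) auto
    also have "\<dots> = d" unfolding \<eta>_def using c1 by simp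
    finally show ?thesis .
  qed
  obtain p where p: "\<forall>t\<in>rspec x. \<bar>f t - poly p t\<bar> \<le> \<eta>" "norm (cfc x f - rpoly_at p x) \<le> \<eta>"
    using cfc_approx[OF x f \<eta>] by blast
  have "\<forall>t\<in>rspec x. \<bar>c * f t - poly (smult c p) t\<bar> \<le> d"
  proof
    fix t assume t: "t \<in> rspec x"
    have "\<bar>c * f t - poly (smult c p) t\<bar> = \<bar>c\<bar> * \<bar>f t - poly p t\<bar>"
      by (simp add: abs_mult[symmetric] right_diff_distrib)
    also have "\<dots> \<le> \<bar>c\<bar> * \<eta>" using p(1) t by (intro mult_left_mono) auto
    finally show "\<bar>c * f t - poly (smult c p) t\<bar> \<le> d" using c\<eta> by simp
  qed
  moreover have "norm (c *\<^sub>R cfc x f - rpoly_at (smult c p) x) \<le> d"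
  proof -
    have "c *\<^sub>R cfc x f - rpoly_at (smult c p) x = c *\<^sub>R (cfc x f - rpoly_at p x)"
      by (simp add: rpoly_at_smult scaleR_diff_right)
    hence "norm (c *\<^sub>R cfc x f - rpoly_at (smult c p) x) = \<bar>c\<bar> * norm (cfc x f - rpoly_at p x)" by simp
    also have "\<dots> \<le> \<bar>c\<bar> * \<eta>" using p(2) by (intro mult_left_mono) auto
    finally show ?thesis using c\<eta> by simp
  qed
  ultimately show "\<exists>p. (\<forall>t\<in>rspec x. \<bar>c * f t - poly p t\<bar> \<le> d) \<and> norm (c *\<^sub>R cfc x f - rpoly_at p x) \<le> d"
    by blast
qed

lemma cfc_zero: "sa x \<Longrightarrow> cfc x (\<lambda>_. 0) = 0"
  using cfc_const[of x 0] by simp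

lemma cfc_diff:
  assumes x: "sa x" and f: "continuous_on (rspec x) f" and g: "continuous_on (rspec x) g"
  shows "cfc x (\<lambda>t. f t - g t) = cfc x f - cfc x g"
proof -
  have "cfc x (\<lambda>t. f t + (-1) * g t) = cfc x f + cfc x (\<lambda>t. (-1) * g t)"
    using f g by (intro cfc_add[OF x]) (auto intro: continuous_intros)
  also have "cfc x (\<lambda>t. (-1) * g t) = - cfc x g" using cfc_scale[OF x g, of "-1"] by simp
  finally show ?thesis by simp
qed

lemma cfc_norm_bound:
  assumes x: "sa x" and f: "continuous_on (rspec x) f" and B: "\<And>t. t \<in> rspec x \<Longrightarrow> \<bar>f t\<bar> \<le> B"
  shows "norm (cfc x f) \<le> B"
  using cfc_dist[OF x f continuous_on_const, of 0 B] B by (simp add: cfc_zero[OF x])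

lemma cfc_mult:
  assumes x: "sa x" and f: "continuous_on (rspec x) f" and g: "continuous_on (rspec x) g"
  shows "cfc x (\<lambda>t. f t * g t) = cfc x f * cfc x g"
proof (rule cfc_eqI[OF x])
  show "continuous_on (rspec x) (\<lambda>t. f t * g t)" using f g by (intro continuous_intros)
  obtain B1 where B1: "B1 > 0" "\<And>t. t \<in> rspec x \<Longrightarrow> \<bar>f t\<bar> \<le> B1" using rspec_function_bounded[OF f] by blast
  obtain B2 where B2: "B2 > 0" "\<And>t. t \<in> rspec x \<Longrightarrow> \<bar>g t\<bar> \<le> B2" using rspec_function_bounded[OF g] by blast
  define B where "B = B1 + B2"
  have B: "B > 0" "\<And>t. t \<in> rspec x \<Longrightarrow> \<bar>f t\<bar> \<le> B" "\<And>t. t \<in> rspec x \<Longrightarrow> \<bar>g t\<bar> \<le> B"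
    unfolding B_def using B1 B2 by force+
  have nf: "norm (cfc x f) \<le> B" using cfc_norm_bound[OF x f B(2)] .
  fix d :: real assume d: "d > 0"
  define \<eta> where "\<eta> = min 1 (d / (2 * B + 1))"
  have Bp: "2 * B + 1 > 0" using B by simp
  have \<eta>: "\<eta> > 0" "\<eta> \<le> 1" "\<eta> * (2 * B + 1) \<le> d" unfolding \<eta>_def using d Bp
    by (auto simp: min_def le_divide_eq)
  obtain p where p: "\<forall>t\<in>rspec x. \<bar>f t - poly p t\<bar> \<le> \<eta>" "norm (cfc x f - rpoly_at p x) \<le> \<eta>"
    using cfc_approx[OF x f \<eta>(1)] by blast
  obtain q where q: "\<forall>t\<in>rspec x. \<bar>g t - poly q t\<bar> \<le> \<eta>" "norm (cfc x g - rpoly_at q x) \<le> \<eta>"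
    using cfc_approx[OF x g \<eta>(1)] by blast
  have "\<forall>t\<in>rspec x. \<bar>f t * g t - poly (p * q) t\<bar> \<le> d"
  proof
    fix t assume t: "t \<in> rspec x"
    have a: "\<bar>f t - poly p t\<bar> \<le> \<eta>" "\<bar>g t - poly q t\<bar> \<le> \<eta>" using p(1) q(1) t by blast+
    have "\<bar>poly q t\<bar> \<le> B + \<eta>" using a(2) B(3)[OF t] by arith
    hence "norm (f t * g t - poly p t * poly q t) \<le> \<eta> * (2 * B + 1)"
      using norm_mult_approx[of "f t" B "poly q t" \<eta> "poly p t" "g t"] B(2)[OF t] a \<eta> by simp
    thus "\<bar>f t * g t - poly (p * q) t\<bar> \<le> d" using \<eta>(3) by simp
  qed
  moreover have "norm (cfc x f * cfc x g - rpoly_at (p * q) x) \<le> d"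
  proof -
    have nq: "norm (rpoly_at q x) \<le> B + \<eta>"
      using cfc_norm_bound[OF x g B(3)] q(2) norm_triangle_ineq2[of "rpoly_at q x" "cfc x g"]
      by (simp add: norm_minus_commute)
    have "norm (cfc x f * cfc x g - rpoly_at p x * rpoly_at q x) \<le> \<eta> * (2 * B + 1)"
      using nf nq p(2) q(2) \<eta> by (intro norm_mult_approx) auto
    thus ?thesis using \<eta>(3) by (simp add: rpoly_at_mult)
  qed
  ultimately show "\<exists>p. (\<forall>t\<in>rspec x. \<bar>f t * g t - poly p t\<bar> \<le> d) \<and> norm (cfc x f * cfc x g - rpoly_at p x) \<le> d"
    by blast
qed

text \<open>\<open>f(x)\<close> is self-adjoint, as a limit of the self-adjoint elements \<open>p(x)\<close>.\<close>
lemma cfc_st: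
  assumes x: "sa x" and f: "continuous_on (rspec x) f"
  shows "st (cfc x f) = cfc x f"
proof -
  have H: "norm (st (cfc x f) - cfc x f) \<le> 0 + e" if e: "e > 0" for e
  proof -
    have e2: "e/2 > 0" using e by simp
    obtain p where p: "norm (cfc x f - rpoly_at p x) \<le> e/2" using cfc_approx[OF x f e2] by blast
    have sp: "st (rpoly_at p x) = rpoly_at p x" using rpoly_at_sa[OF x] unfolding sa_def .
    have "st (cfc x f) - cfc x f = st (cfc x f - rpoly_at p x) - (cfc x f - rpoly_at p x)"
      by (simp add: st_diff sp)
    hence "norm (st (cfc x f) - cfc x f) \<le> norm (st (cfc x f - rpoly_at p x)) + norm (cfc x f - rpoly_at p x)"
      by (simp only: norm_triangle_ineq4)
    thus ?thesis using p by simp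
  qed
  have "norm (st (cfc x f) - cfc x f) \<le> 0" by (rule field_le_epsilon) (rule H)
  thus ?thesis by simp
qed

lemma cfc_sa: "sa x \<Longrightarrow> continuous_on (rspec x) f \<Longrightarrow> sa (cfc x f)"
  using cfc_st unfolding sa_def[of "cfc x f"] by blast

lemma cfc_one: "sa x \<Longrightarrow> cfc x (\<lambda>_. 1) = 1"
  using cfc_const[of x 1] by simp

lemma cfc_pow:
  assumes x: "sa x" and f: "continuous_on (rspec x) f"
  shows "cfc x (\<lambda>t. f t ^ n) = (cfc x f) ^ n"
proof (induction n)
  case 0 thus ?case using cfc_one[OF x] by simp
next
  case (Suc n)
  have "cfc x (\<lambda>t. f t ^ Suc n) = cfc x (\<lambda>t. f t * f t ^ n)" by simp
  also have "\<dots> = cfc x f * cfc x (\<lambda>t. f t ^ n)"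
    using f by (intro cfc_mult[OF x]) (auto intro: continuous_intros)
  finally show ?case using Suc by simp
qed

lemma cfc_comp_poly:
  assumes x: "sa x" and f: "continuous_on (rspec x) f"
  shows "cfc x (\<lambda>t. poly p (f t)) = rpoly_at p (cfc x f)"
proof (induction p)
  case 0 thus ?case using cfc_zero[OF x] by simp
next
  case (pCons a p)
  have "cfc x (\<lambda>t. poly (pCons a p) (f t)) = cfc x (\<lambda>t. a + f t * poly p (f t))" by simp
  also have "\<dots> = cfc x (\<lambda>_. a) + cfc x (\<lambda>t. f t * poly p (f t))"
    using f by (intro cfc_add[OF x]) (auto intro: continuous_intros)
  also have "cfc x (\<lambda>t. f t * poly p (f t)) = cfc x f * cfc x (\<lambda>t. poly p (f t))"
    using f by (intro cfc_mult[OF x]) (auto intro: continuous_intros)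
  finally show ?case using pCons.IH cfc_const[OF x] by (simp add: rpoly_at_pCons)
qed

lemma cfc_comm:
  assumes x: "sa x" and f: "continuous_on (rspec x) f" and g: "continuous_on (rspec x) g"
  shows "cfc x f * cfc x g = cfc x g * cfc x f"
  using cfc_mult[OF x f g] cfc_mult[OF x g f] by (simp add: mult.commute)

text \<open>Non-negative functions give positive elements: for \<open>r < 0\<close>, \<open>f(x) - r\<close> has inverse \<open>(f - r)\<inverse>(x)\<close>.\<close>
lemma cfc_pos:
  assumes x: "sa x" and f: "continuous_on (rspec x) f" and nn: "\<And>t. t \<in> rspec x \<Longrightarrow> f t \<ge> 0"
  shows "cpositive st sc (cfc x f)"
  unfolding cpositive_def
proof
  show "st (cfc x f) = cfc x f" by (rule cfc_st[OF x f])
  show "cspectrum sc (cfc x f) \<subseteq> complex_of_real ` {0..}"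
  proof
    fix l assume l: "l \<in> cspectrum sc (cfc x f)"
    have lr: "l = complex_of_real (Re l)" using spec_sa_real[OF cfc_sa[OF x f] l] by blast
    have "Re l \<ge> 0"
    proof (rule ccontr)
      assume "\<not> Re l \<ge> 0"
      hence r: "Re l < 0" by simp
      define r where "r = Re l"
      have pos: "t \<in> rspec x \<Longrightarrow> f t - r > 0" for t using nn[of t] r unfolding r_def by simp
      define g where "g t = 1 / (f t - r)" for t
      have g: "continuous_on (rspec x) g" unfolding g_def using f pos
        by (intro continuous_intros) (auto simp: less_irrefl)
      have fr: "continuous_on (rspec x) (\<lambda>t. f t - r)" using f by (intro continuous_intros)
      have slr: "sc l 1 = of_real r" unfolding r_def by (subst lr) (rule sc_of_real)
      have e1: "cfc x (\<lambda>t. f t - r) = cfc x f - sc l 1"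
        using cfc_diff[OF x f continuous_on_const, of r] cfc_const[OF x, of r] slr by simp
      have one: "cfc x (\<lambda>t. g t * (f t - r)) = 1"
      proof -
        have "cfc x (\<lambda>t. g t * (f t - r)) = cfc x (\<lambda>_. 1)"
          by (rule cfc_cong) (use pos in \<open>auto simp: g_def\<close>)
        thus ?thesis using cfc_one[OF x] by simp
      qed
      have "cfc x g * (cfc x f - sc l 1) = 1" using cfc_mult[OF x g fr] one e1 by simp
      moreover have "(cfc x f - sc l 1) * cfc x g = 1"
        using cfc_mult[OF x g fr] one e1 cfc_comm[OF x g fr] by simp
      ultimately have "is_invertible (cfc x f - sc l 1)" unfolding is_invertible_def by blast
      thus False using l spec_iff by blast
    qed
    thus "l \<in> complex_of_real ` {0..}" using lr by auto
  qed
qed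


section \<open>Faithfulness of the functional calculus on the spectrum\<close>

text \<open>A spectral point \<open>t\<^sub>0\<close> cannot be "divided out": \<open>(t - t\<^sub>0)\<^sup>2 r(t)\<close> never calculates to \<open>1\<close>, for
  otherwise \<open>x - t\<^sub>0\<close> would be invertible with inverse \<open>(x - t\<^sub>0) r(x)\<close>.\<close>
lemma rspec_point_obstruction:
  assumes x: "sa x" and t0: "t0 \<in> rspec x" and cr: "continuous_on (rspec x) r"
  shows "cfc x (\<lambda>t. (t - t0)\<^sup>2 * r t) \<noteq> 1"
proof
  assume e1: "cfc x (\<lambda>t. (t - t0)\<^sup>2 * r t) = 1"
  have sq: "continuous_on (rspec x) (\<lambda>t. (t - t0)\<^sup>2)" by (intro continuous_intros)
  define u where "u = x - of_real t0"
  have cu: "cfc x (\<lambda>t. t - t0) = u"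
    unfolding u_def using cfc_diff[OF x continuous_on_id continuous_on_const, of t0] cfc_id[OF x] cfc_const[OF x, of t0]
    by simp
  have cu2: "cfc x (\<lambda>t. (t - t0)\<^sup>2) = u * u"
    using cfc_pow[OF x, of "\<lambda>t. t - t0" 2] cu by (simp add: power2_eq_square continuous_intros)
  have A: "u * u * cfc x r = 1" using cfc_mult[OF x sq cr] e1 cu2 by simp
  have cm: "cfc x r * u = u * cfc x r"
    using cfc_comm[OF x cr, of "\<lambda>t. t - t0"] cu by (simp add: continuous_intros)
  have "(u * cfc x r) * u = u * (cfc x r * u)" by (simp only: mult.assoc)
  also have "\<dots> = u * (u * cfc x r)" using cm by simp
  also have "\<dots> = 1" using A by (simp only: mult.assoc)
  finally have "(u * cfc x r) * u = 1" .
  moreover have "u * (u * cfc x r) = 1" using A by (simp add: mult.assoc)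
  ultimately have "is_invertible u" unfolding is_invertible_def by blast
  moreover have "u = x - sc (complex_of_real t0) 1" unfolding u_def by (simp add: sc_of_real)
  ultimately show False using t0 unfolding rspec_def spec_iff by simp
qed

text \<open>The calculus detects values on the spectrum: if \<open>g(t\<^sub>0) \<noteq> 0\<close> at a spectral point then
  \<open>g(x) \<noteq> 0\<close>; otherwise local division would contradict \<open>rspec_point_obstruction\<close>.\<close>
lemma cfc_nonzero:
  assumes x: "sa x" and g: "continuous_on (rspec x) g" and t0: "t0 \<in> rspec x" and g0: "g t0 \<noteq> 0"
  shows "cfc x g \<noteq> 0"
proof
  assume cg: "cfc x g = 0"
  obtain r \<rho> where cr: "continuous_on (rspec x) r" and c\<rho>: "continuous_on (rspec x) \<rho>"
    and div: "\<And>t. t \<in> rspec x \<Longrightarrow> 1 - (t - t0)\<^sup>2 * r t = \<rho> t * g t"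
    using local_division[OF g t0 g0] by blast
  have "cfc x (\<lambda>t. 1 - (t - t0)\<^sup>2 * r t) = cfc x (\<lambda>t. \<rho> t * g t)" by (rule cfc_cong) (use div in auto)
  also have "\<dots> = cfc x \<rho> * cfc x g" by (rule cfc_mult[OF x c\<rho> g])
  finally have "1 - cfc x (\<lambda>t. (t - t0)\<^sup>2 * r t) = 0"
    using cg cfc_diff[OF x continuous_on_const, of "\<lambda>t. (t - t0)\<^sup>2 * r t" 1] cfc_one[OF x] cr
    by (simp add: continuous_intros)
  thus False using rspec_point_obstruction[OF x t0 cr] by simp
qed

section \<open>Positive roots\<close>

lemma rspec_pos: "cpositive st sc b \<Longrightarrow> t \<in> rspec b \<Longrightarrow> 0 \<le> t \<and> t \<le> norm b"
proof -
  assume b: "cpositive st sc b" and t: "t \<in> rspec b"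
  hence "complex_of_real t \<in> complex_of_real ` {0..}" unfolding rspec_def cpositive_def by blast
  hence "0 \<le> t" by (auto simp: of_real_eq_iff)
  moreover have "t \<le> norm b" using rspec_bound[OF t] by simp
  ultimately show ?thesis by simp
qed

text \<open>A positive \<open>b\<close> is recovered from \<open>b\<^sup>m\<close> by any polynomial \<open>p\<close> approximating the \<open>m\<close>-th root on an
  interval \<open>[0, M]\<close> containing the spectrum of \<open>b\<^sup>m\<close>: \<open>\<parallel>b - p(b\<^sup>m)\<parallel> \<le> e\<close>, since \<open>t = (t\<^sup>m)\<^bsup>1/m\<^esup>\<close> on \<open>\<sigma>(b)\<close>.\<close>
lemma positive_root_approx:
  assumes b: "cpositive st sc b" and m: "m > 0" and M: "norm b ^ m \<le> M"
    and p: "\<forall>y\<in>{0..M}. \<bar>root m y - poly p y\<bar> < e"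
  shows "norm (b - rpoly_at p (b ^ m)) \<le> e"
proof -
  have sb: "sa b" using b unfolding cpositive_def sa_def by blast
  have cpb: "continuous_on (rspec b) (\<lambda>t. t ^ m)" by (intro continuous_intros)
  have "rpoly_at p (b ^ m) = cfc b (\<lambda>t. poly p (t ^ m))"
    using cfc_comp_poly[OF sb cpb, of p] cfc_pow[OF sb continuous_on_id, of m] cfc_id[OF sb] by simp
  moreover have "norm (cfc b (\<lambda>t. t) - cfc b (\<lambda>t. poly p (t ^ m))) \<le> e"
  proof (rule cfc_dist[OF sb continuous_on_id])
    show "continuous_on (rspec b) (\<lambda>t. poly p (t ^ m))" by (intro continuous_intros)
    fix t assume t: "t \<in> rspec b"
    have t0: "0 \<le> t" "t \<le> norm b" using rspec_pos[OF b t] by auto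
    have "t ^ m \<le> norm b ^ m" using t0 by (intro power_mono) auto
    hence "\<bar>root m (t ^ m) - poly p (t ^ m)\<bar> < e" using p t0 M by auto
    thus "\<bar>t - poly p (t ^ m)\<bar> \<le> e" using real_root_power_cancel[OF m t0(1)] by simp
  qed
  ultimately show ?thesis using cfc_id[OF sb] by simp
qed

text \<open>Uniqueness of positive roots: a positive \<open>b\<close> with \<open>b\<^sup>m = f(x)\<close> equals \<open>(f\<^bsup>1/m\<^esup>)(x)\<close>, as both are
  approximated by \<open>p(b\<^sup>m) = p(f(x))\<close> where \<open>p\<close> approximates the \<open>m\<close>-th root on \<open>[0, M]\<close>.\<close>
lemma root_unique:
  assumes x: "sa x" and f: "continuous_on (rspec x) f" and nn: "\<And>t. t \<in> rspec x \<Longrightarrow> f t \<ge> 0"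
    and m: "m > 0" and b: "cpositive st sc b" and bm: "b ^ m = cfc x f"
  shows "b = cfc x (\<lambda>t. root m (f t))"
proof -
  obtain B where B: "B > 0" "\<And>t. t \<in> rspec x \<Longrightarrow> \<bar>f t\<bar> \<le> B" using rspec_function_bounded[OF f] by blast
  define M where "M = max (norm b ^ m) B"
  have crf: "continuous_on (rspec x) (\<lambda>t. root m (f t))" using f by (intro continuous_intros)
  have "norm (b - cfc x (\<lambda>t. root m (f t))) \<le> 0 + e" if e: "e > 0" for e
  proof -
    have "continuous_on {0..M} (root m)" by (intro continuous_intros)
    then obtain p where p: "\<forall>y\<in>{0..M}. \<bar>root m y - poly p y\<bar> < e/2"
      using weierstrass_poly[OF compact_Icc _ half_gt_zero[OF e]] by blast
    have d1: "norm (b - rpoly_at p (cfc x f)) \<le> e/2"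
      using positive_root_approx[OF b m _ p] bm unfolding M_def by simp
    have "norm (cfc x (\<lambda>t. root m (f t)) - cfc x (\<lambda>t. poly p (f t))) \<le> e/2"
    proof (rule cfc_dist[OF x crf])
      show "continuous_on (rspec x) (\<lambda>t. poly p (f t))" using f by (intro continuous_intros)
      fix t assume t: "t \<in> rspec x"
      have "f t \<in> {0..M}" using nn[OF t] B(2)[OF t] unfolding M_def by auto
      thus "\<bar>root m (f t) - poly p (f t)\<bar> \<le> e/2" using p by (auto intro: less_imp_le)
    qed
    hence d2: "norm (cfc x (\<lambda>t. root m (f t)) - rpoly_at p (cfc x f)) \<le> e/2"
      using cfc_comp_poly[OF x f] by simp
    show ?thesis using norm_triangle_ineq4[of "b - rpoly_at p (cfc x f)" "cfc x (\<lambda>t. root m (f t)) - rpoly_at p (cfc x f)"] d1 d2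
      by simp
  qed
  hence "norm (b - cfc x (\<lambda>t. root m (f t))) \<le> 0" by (rule field_le_epsilon)
  thus ?thesis by simp
qed

lemma proot_cfc:
  assumes x: "sa x" and f: "continuous_on (rspec x) f" and nn: "\<And>t. t \<in> rspec x \<Longrightarrow> f t \<ge> 0"
    and m: "m > 0"
  shows "proot st sc m (cfc x f) = cfc x (\<lambda>t. root m (f t))"
  unfolding proot_def
proof (rule the_equality)
  have crf: "continuous_on (rspec x) (\<lambda>t. root m (f t))" using f by (intro continuous_intros)
  show "cpositive st sc (cfc x (\<lambda>t. root m (f t))) \<and> cfc x (\<lambda>t. root m (f t)) ^ m = cfc x f"
  proof
    show "cpositive st sc (cfc x (\<lambda>t. root m (f t)))"
      by (rule cfc_pos[OF x crf]) (use nn in \<open>simp add: real_root_ge_zero\<close>)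
    have "cfc x (\<lambda>t. root m (f t)) ^ m = cfc x (\<lambda>t. root m (f t) ^ m)" by (rule cfc_pow[OF x crf, symmetric])
    also have "\<dots> = cfc x f" by (rule cfc_cong) (use nn m in simp)
    finally show "cfc x (\<lambda>t. root m (f t)) ^ m = cfc x f" .
  qed
  fix b assume "cpositive st sc b \<and> b ^ m = cfc x f"
  thus "b = cfc x (\<lambda>t. root m (f t))" using root_unique[OF x f nn m] by blast
qed


end

section \<open>Cut functions\<close>

definition upper_cut :: "real \<Rightarrow> real \<Rightarrow> real" where
  "upper_cut c y = min (max (y - c) 0) 1"

definition lower_cut :: "real \<Rightarrow> real \<Rightarrow> real" where
  "lower_cut c y = min (max (c - y) 0) 1"

lemma cut_range: "0 \<le> upper_cut c y" "upper_cut c y \<le> 1" "0 \<le> lower_cut c y" "lower_cut c y \<le> 1"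
  unfolding upper_cut_def lower_cut_def by auto

lemma cut_orthogonal: "upper_cut c y * lower_cut c y = 0"
  unfolding upper_cut_def lower_cut_def by (auto simp: max_def)

lemma continuous_on_cuts: "continuous_on K (upper_cut c)" "continuous_on K (lower_cut c)"
  unfolding upper_cut_def lower_cut_def by (intro continuous_intros)+

lemma real_root_le_one: "x \<le> 1 \<Longrightarrow> root (Suc n) x \<le> 1"
  using real_root_le_iff[of "Suc n" x 1] by simp

lemma cut_root_sum:
  "root (Suc n) (upper_cut c y) + root (Suc n) (lower_cut c y) = root (Suc n) (min \<bar>y - c\<bar> 1)"
  unfolding upper_cut_def lower_cut_def by (cases "y \<ge> c") (auto simp: max_def)

text \<open>If the points of \<open>C\<close> are \<open>2\<delta>\<close>-separated, then at any \<open>y\<close> at most one term of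
  \<open>\<Sum>\<^bsub>c\<in>C\<^esub> (1 - min (|y - c|) 1\<^bsup>1/n\<^esup>)\<close> exceeds \<open>1 - \<delta>\<^bsup>1/n\<^esup>\<close>, and that term is at most \<open>1\<close>.\<close>
lemma cut_deficit_sum_bound:
  fixes C :: "real set"
  assumes fin: "finite C" and \<delta>: "0 < \<delta>" "\<delta> \<le> 1"
    and gap: "\<And>c c'. c \<in> C \<Longrightarrow> c' \<in> C \<Longrightarrow> c \<noteq> c' \<Longrightarrow> 2 * \<delta> \<le> \<bar>c - c'\<bar>"
  shows "(\<Sum>c\<in>C. 1 - root (Suc n) (min \<bar>y - c\<bar> 1)) \<le> 1 + real (card C) * (1 - root (Suc n) \<delta>)"
proof -
  have rd: "root (Suc n) \<delta> \<le> 1" using \<delta> by (simp add: real_root_le_one)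
  have each: "1 - root (Suc n) (min \<bar>y - c\<bar> 1) \<le> (if \<bar>y - c\<bar> < \<delta> then 1 else 0) + (1 - root (Suc n) \<delta>)" for c
  proof (cases "\<bar>y - c\<bar> < \<delta>")
    case True
    have r0: "0 \<le> root (Suc n) (min \<bar>y - c\<bar> 1)" by (simp add: real_root_ge_zero)
    have "1 - root (Suc n) (min \<bar>y - c\<bar> 1) \<le> 1 + (1 - root (Suc n) \<delta>)" using r0 rd by linarith
    thus ?thesis using True by simp
  next
    case False
    hence "\<delta> \<le> min \<bar>y - c\<bar> 1" using \<delta> by simp
    hence "root (Suc n) \<delta> \<le> root (Suc n) (min \<bar>y - c\<bar> 1)" by (simp add: real_root_le_iff)
    thus ?thesis using False by simp
  qed
  have card1: "card {c \<in> C. \<bar>y - c\<bar> < \<delta>} \<le> 1"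
  proof -
    have "\<forall>c1\<in>{c \<in> C. \<bar>y - c\<bar> < \<delta>}. \<forall>c2\<in>{c \<in> C. \<bar>y - c\<bar> < \<delta>}. c1 = c2"
    proof (intro ballI, rule ccontr)
      fix c1 c2 assume c1: "c1 \<in> {c \<in> C. \<bar>y - c\<bar> < \<delta>}" and c2: "c2 \<in> {c \<in> C. \<bar>y - c\<bar> < \<delta>}" and ne: "c1 \<noteq> c2"
      have "2 * \<delta> \<le> \<bar>c1 - c2\<bar>" using gap c1 c2 ne by blast
      moreover have "\<bar>c1 - c2\<bar> < 2 * \<delta>" using c1 c2 by auto
      ultimately show False by simp
    qed
    thus ?thesis using card_le_Suc0_iff_eq[of "{c \<in> C. \<bar>y - c\<bar> < \<delta>}"] fin by simp
  qed
  have "(\<Sum>c\<in>C. 1 - root (Suc n) (min \<bar>y - c\<bar> 1))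
      \<le> (\<Sum>c\<in>C. (if \<bar>y - c\<bar> < \<delta> then 1 else 0) + (1 - root (Suc n) \<delta>))"
    by (rule sum_mono) (rule each)
  also have "\<dots> = (\<Sum>c\<in>C. if \<bar>y - c\<bar> < \<delta> then 1 else 0) + real (card C) * (1 - root (Suc n) \<delta>)"
    by (simp add: sum.distrib)
  also have "(\<Sum>c\<in>C. if \<bar>y - c\<bar> < \<delta> then 1 else (0::real)) = real (card {c \<in> C. \<bar>y - c\<bar> < \<delta>})"
    using sum.inter_filter[OF fin, of "\<lambda>_. 1::real" "\<lambda>c. \<bar>y - c\<bar> < \<delta>", symmetric] by simp
  finally show ?thesis using card1 by simp
qed

lemma finite_set_separation:
  fixes C :: "real set"
  assumes fin: "finite C"
  obtains \<delta> where "0 < \<delta>" "\<delta> \<le> 1" "\<And>c c'. c \<in> C \<Longrightarrow> c' \<in> C \<Longrightarrow> c \<noteq> c' \<Longrightarrow> 2 * \<delta> \<le> \<bar>c - c'\<bar>"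
proof -
  define G where "G = (\<lambda>(c, c'). \<bar>c - c'\<bar> / 2) ` {p \<in> C \<times> C. fst p \<noteq> snd p}"
  have fG: "finite G" unfolding G_def using fin by auto
  define \<delta> where "\<delta> = Min (insert 1 G)"
  have "0 < \<delta>" unfolding \<delta>_def using fG by (auto simp: G_def)
  moreover have "\<delta> \<le> 1" unfolding \<delta>_def using fG by simp
  moreover have "2 * \<delta> \<le> \<bar>c - c'\<bar>" if "c \<in> C" "c' \<in> C" "c \<noteq> c'" for c c'
  proof -
    have "\<bar>c - c'\<bar> / 2 \<in> G" unfolding G_def using that by (auto intro!: image_eqI[of _ _ "(c, c')"])
    hence "\<delta> \<le> \<bar>c - c'\<bar> / 2" unfolding \<delta>_def using fG by (intro Min_le) auto
    thus ?thesis by simp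
  qed
  ultimately show ?thesis using that by blast
qed


section \<open>Traces of functions of a self-adjoint element\<close>

locale cstar_trace = cstar st sc for st :: "'a::{real_normed_algebra_1,banach} \<Rightarrow> 'a" and sc +
  fixes \<tau> :: "'a \<Rightarrow> complex"
  assumes tr: "tracial_state st sc \<tau>" and fa: "faithful st \<tau>"
begin

lemma tau_add: "\<tau> (x + y) = \<tau> x + \<tau> y" using tr unfolding tracial_state_def by blast
lemma tau_sc: "\<tau> (sc c x) = c * \<tau> x" using tr unfolding tracial_state_def by blast
lemma tau_pos: "Im (\<tau> (st x * x)) = 0 \<and> Re (\<tau> (st x * x)) \<ge> 0" using tr unfolding tracial_state_def by blast
lemma tau_one: "\<tau> 1 = 1" using tr unfolding tracial_state_def by blast
lemma tau_faithful: "\<tau> (st x * x) = 0 \<Longrightarrow> x = 0" using fa unfolding faithful_def by blast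

lemma tau_diff: "\<tau> (x - y) = \<tau> x - \<tau> y"
  using tau_add[of "x - y" y] by (simp add: algebra_simps)
lemma tau_scaleR: "\<tau> (r *\<^sub>R x) = complex_of_real r * \<tau> x"
  using tau_sc[of "complex_of_real r" x] by (simp add: sc_real)
lemma tau_of_real: "\<tau> (of_real r) = complex_of_real r"
  using tau_scaleR[of r 1] tau_one by (simp add: of_real_def)

text \<open>For \<open>f \<ge> 0\<close>, \<open>f(h) = k\<^sup>*k\<close> with \<open>k = (\<surd>f)(h)\<close>, so \<open>\<tau>(f(h)) \<ge> 0\<close>.\<close>
lemma tau_cfc_nonneg:
  assumes h: "sa h" and f: "continuous_on (rspec h) f" and nn: "\<And>t. t \<in> rspec h \<Longrightarrow> f t \<ge> 0"
  shows "Im (\<tau> (cfc h f)) = 0 \<and> Re (\<tau> (cfc h f)) \<ge> 0"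
    and "cfc h f = st (cfc h (\<lambda>t. sqrt (f t))) * cfc h (\<lambda>t. sqrt (f t))"
proof -
  have cs: "continuous_on (rspec h) (\<lambda>t. sqrt (f t))" using f by (intro continuous_intros)
  have "cfc h (\<lambda>t. sqrt (f t)) * cfc h (\<lambda>t. sqrt (f t)) = cfc h (\<lambda>t. sqrt (f t) * sqrt (f t))"
    by (rule cfc_mult[OF h cs cs, symmetric])
  also have "\<dots> = cfc h f" by (rule cfc_cong) (use nn in simp)
  finally show e: "cfc h f = st (cfc h (\<lambda>t. sqrt (f t))) * cfc h (\<lambda>t. sqrt (f t))"
    using cfc_st[OF h cs] by simp
  show "Im (\<tau> (cfc h f)) = 0 \<and> Re (\<tau> (cfc h f)) \<ge> 0" unfolding e by (rule tau_pos)
qed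

text \<open>\<open>\<tau>(f(h))\<close> is real for every real continuous \<open>f\<close> (shift \<open>f\<close> to be non-negative).\<close>
lemma tau_cfc_real:
  assumes h: "sa h" and f: "continuous_on (rspec h) f"
  shows "\<tau> (cfc h f) = complex_of_real (Re (\<tau> (cfc h f)))"
proof -
  obtain B where B: "B > 0" "\<And>t. t \<in> rspec h \<Longrightarrow> \<bar>f t\<bar> \<le> B" using rspec_function_bounded[OF f] by blast
  have fB: "continuous_on (rspec h) (\<lambda>t. f t + B)" using f by (intro continuous_intros)
  have nn: "f t + B \<ge> 0" if "t \<in> rspec h" for t using B(2)[OF that] by (simp add: abs_le_iff)
  have "Im (\<tau> (cfc h (\<lambda>t. f t + B))) = 0"
    using tau_cfc_nonneg(1)[OF h fB nn] by blast
  moreover have "cfc h (\<lambda>t. f t + B) = cfc h f + of_real B"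
    using cfc_add[OF h f continuous_on_const] cfc_const[OF h] by simp
  ultimately have "Im (\<tau> (cfc h f)) = 0" by (simp add: tau_add tau_of_real)
  thus ?thesis by (simp add: complex_eq_iff)
qed

definition trace_cfc :: "'a \<Rightarrow> (real \<Rightarrow> real) \<Rightarrow> real" where "trace_cfc h f = Re (\<tau> (cfc h f))"

lemma tau_trace_cfc: "sa h \<Longrightarrow> continuous_on (rspec h) f \<Longrightarrow> \<tau> (cfc h f) = complex_of_real (trace_cfc h f)"
  unfolding trace_cfc_def by (rule tau_cfc_real)

lemma trace_cfc_add: "sa h \<Longrightarrow> continuous_on (rspec h) f \<Longrightarrow> continuous_on (rspec h) g \<Longrightarrow>
    trace_cfc h (\<lambda>t. f t + g t) = trace_cfc h f + trace_cfc h g"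
  unfolding trace_cfc_def by (simp add: cfc_add tau_add)

lemma trace_cfc_diff: "sa h \<Longrightarrow> continuous_on (rspec h) f \<Longrightarrow> continuous_on (rspec h) g \<Longrightarrow>
    trace_cfc h (\<lambda>t. f t - g t) = trace_cfc h f - trace_cfc h g"
  unfolding trace_cfc_def by (simp add: cfc_diff tau_diff)

lemma trace_cfc_const: "sa h \<Longrightarrow> trace_cfc h (\<lambda>_. c) = c"
  unfolding trace_cfc_def by (simp add: cfc_const tau_of_real)

lemma trace_cfc_nonneg: "sa h \<Longrightarrow> continuous_on (rspec h) f \<Longrightarrow> (\<And>t. t \<in> rspec h \<Longrightarrow> f t \<ge> 0) \<Longrightarrow> trace_cfc h f \<ge> 0"
  unfolding trace_cfc_def using tau_cfc_nonneg(1) by blast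

lemma trace_cfc_mono:
  assumes h: "sa h" and f: "continuous_on (rspec h) f" and g: "continuous_on (rspec h) g"
    and le: "\<And>t. t \<in> rspec h \<Longrightarrow> f t \<le> g t"
  shows "trace_cfc h f \<le> trace_cfc h g"
proof -
  have "trace_cfc h (\<lambda>t. g t - f t) \<ge> 0"
    using le by (intro trace_cfc_nonneg[OF h]) (auto intro: continuous_intros f g)
  thus ?thesis using trace_cfc_diff[OF h g f] by simp
qed

lemma trace_cfc_sum:
  assumes h: "sa h" and fin: "finite C" and f: "\<And>c. c \<in> C \<Longrightarrow> continuous_on (rspec h) (F c)"
  shows "trace_cfc h (\<lambda>t. \<Sum>c\<in>C. F c t) = (\<Sum>c\<in>C. trace_cfc h (F c))"
  using fin f
proof (induction C rule: finite_induct)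
  case empty thus ?case using trace_cfc_const[OF h, of 0] by simp
next
  case (insert c C)
  have "trace_cfc h (\<lambda>t. \<Sum>c\<in>insert c C. F c t) = trace_cfc h (\<lambda>t. F c t + (\<Sum>c\<in>C. F c t))"
    using insert by simp
  also have "\<dots> = trace_cfc h (F c) + trace_cfc h (\<lambda>t. \<Sum>c\<in>C. F c t)"
    using insert.prems by (intro trace_cfc_add[OF h]) (auto intro!: continuous_intros)
  finally show ?case using insert by simp
qed

text \<open>Faithfulness of \<open>\<tau>\<close> together with \<open>cfc_nonzero\<close>: a non-negative function that is positive
  somewhere on the spectrum has positive trace.\<close>
lemma trace_cfc_pos:
  assumes h: "sa h" and f: "continuous_on (rspec h) f" and nn: "\<And>t. t \<in> rspec h \<Longrightarrow> f t \<ge> 0"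
    and t0: "t0 \<in> rspec h" and ft0: "f t0 > 0"
  shows "trace_cfc h f > 0"
proof -
  have cs: "continuous_on (rspec h) (\<lambda>t. sqrt (f t))" using f by (intro continuous_intros)
  have k0: "cfc h (\<lambda>t. sqrt (f t)) \<noteq> 0" by (rule cfc_nonzero[OF h cs t0]) (use ft0 in simp)
  have "\<tau> (cfc h f) \<noteq> 0"
    using tau_cfc_nonneg(2)[OF h f nn] tau_faithful k0 by metis
  moreover have "Im (\<tau> (cfc h f)) = 0 \<and> Re (\<tau> (cfc h f)) \<ge> 0" by (rule tau_cfc_nonneg(1)[OF h f nn])
  ultimately show ?thesis unfolding trace_cfc_def by (simp add: complex_eq_iff)
qed

section \<open>The dimension function of a cut\<close>

text \<open>For \<open>0 \<le> f \<le> 1\<close>, \<open>d\<^sub>\<tau>(f(h))\<close> is the limit of the increasing bounded sequence \<open>\<tau>(f\<^bsup>1/n\<^esup>(h))\<close>.\<close>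
definition dim_fn :: "'a \<Rightarrow> (real \<Rightarrow> real) \<Rightarrow> real" where
  "dim_fn h f = lim (\<lambda>n. trace_cfc h (\<lambda>y. root (Suc n) (f y)))"

lemma dim_fn_limit:
  assumes h: "sa h" and f: "continuous_on (rspec h) f" and f01: "\<And>y. 0 \<le> f y" "\<And>y. f y \<le> 1"
  shows "incseq (\<lambda>n. trace_cfc h (\<lambda>y. root (Suc n) (f y)))"
    and "(\<lambda>n. trace_cfc h (\<lambda>y. root (Suc n) (f y))) \<longlonglongrightarrow> dim_fn h f"
proof -
  have cr: "continuous_on (rspec h) (\<lambda>y. root (Suc n) (f y))" for n using f by (intro continuous_intros)
  show inc: "incseq (\<lambda>n. trace_cfc h (\<lambda>y. root (Suc n) (f y)))"
  proof (rule incseq_SucI)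
    fix n show "trace_cfc h (\<lambda>y. root (Suc n) (f y)) \<le> trace_cfc h (\<lambda>y. root (Suc (Suc n)) (f y))"
      by (rule trace_cfc_mono[OF h cr cr]) (use f01 in \<open>simp add: real_root_increasing\<close>)
  qed
  have "trace_cfc h (\<lambda>y. root (Suc n) (f y)) \<le> 1" for n
    using trace_cfc_mono[OF h cr continuous_on_const, of n 1] f01 trace_cfc_const[OF h, of 1]
    by (simp add: real_root_le_one)
  then obtain l where "(\<lambda>n. trace_cfc h (\<lambda>y. root (Suc n) (f y))) \<longlonglongrightarrow> l"
    using incseq_convergent[OF inc] by blast
  thus "(\<lambda>n. trace_cfc h (\<lambda>y. root (Suc n) (f y))) \<longlonglongrightarrow> dim_fn h f"
    unfolding dim_fn_def by (simp add: limI)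
qed

text \<open>\<open>dim_fn h f\<close> is indeed \<open>d\<^sub>\<tau>(f(h))\<close>, since \<open>f(h)\<^bsup>1/n\<^esup> = f\<^bsup>1/n\<^esup>(h)\<close>.\<close>
lemma dtau_cfc:
  assumes h: "sa h" and f: "continuous_on (rspec h) f" and f01: "\<And>y. 0 \<le> f y" "\<And>y. f y \<le> 1"
  shows "dtau_eq st sc \<tau> (cfc h f) (dim_fn h f)"
  unfolding dtau_eq_def
proof -
  have "\<tau> (proot st sc (Suc n) (cfc h f)) = complex_of_real (trace_cfc h (\<lambda>y. root (Suc n) (f y)))" for n
  proof -
    have "proot st sc (Suc n) (cfc h f) = cfc h (\<lambda>y. root (Suc n) (f y))"
      by (rule proot_cfc[OF h f]) (use f01 in auto)
    moreover have "continuous_on (rspec h) (\<lambda>y. root (Suc n) (f y))" using f by (intro continuous_intros)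
    ultimately show ?thesis using tau_trace_cfc[OF h] by simp
  qed
  thus "(\<lambda>n. \<tau> (proot st sc (Suc n) (cfc h f))) \<longlonglongrightarrow> complex_of_real (dim_fn h f)"
    using tendsto_of_real[OF dim_fn_limit(2)[OF h f f01]] by simp
qed

lemma dim_fn_pos:
  assumes h: "sa h" and f: "continuous_on (rspec h) f" and f01: "\<And>y. 0 \<le> f y" "\<And>y. f y \<le> 1"
    and t: "t \<in> rspec h" "f t > 0"
  shows "dim_fn h f > 0"
proof -
  have "trace_cfc h (\<lambda>y. root (Suc 0) (f y)) > 0"
    by (rule trace_cfc_pos[OF h _ _ t(1)]) (use f f01 t(2) in auto)
  moreover have "trace_cfc h (\<lambda>y. root (Suc 0) (f y)) \<le> dim_fn h f"
    by (rule incseq_le[OF dim_fn_limit[OF h f f01]])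
  ultimately show ?thesis by simp
qed

definition deficiency :: "'a \<Rightarrow> real \<Rightarrow> real" where
  "deficiency h c = 1 - dim_fn h (upper_cut c) - dim_fn h (lower_cut c)"

lemma deficiency_limit:
  assumes h: "sa h"
  shows "(\<lambda>n. trace_cfc h (\<lambda>y. 1 - root (Suc n) (min \<bar>y - c\<bar> 1))) \<longlonglongrightarrow> deficiency h c"
proof -
  have cU: "continuous_on (rspec h) (\<lambda>y. root (Suc n) (upper_cut c y))" for n
    by (intro continuous_intros continuous_on_cuts)
  have cV: "continuous_on (rspec h) (\<lambda>y. root (Suc n) (lower_cut c y))" for n
    by (intro continuous_intros continuous_on_cuts)
  have "trace_cfc h (\<lambda>y. 1 - root (Suc n) (min \<bar>y - c\<bar> 1))
      = 1 - trace_cfc h (\<lambda>y. root (Suc n) (upper_cut c y)) - trace_cfc h (\<lambda>y. root (Suc n) (lower_cut c y))"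
    for n
  proof -
    have "trace_cfc h (\<lambda>y. 1 - root (Suc n) (min \<bar>y - c\<bar> 1))
        = trace_cfc h (\<lambda>y. (1 - root (Suc n) (upper_cut c y)) - root (Suc n) (lower_cut c y))"
      using cut_root_sum[of n c] by (simp add: algebra_simps)
    also have "\<dots> = trace_cfc h (\<lambda>y. 1 - root (Suc n) (upper_cut c y)) - trace_cfc h (\<lambda>y. root (Suc n) (lower_cut c y))"
      by (rule trace_cfc_diff[OF h]) (intro continuous_intros cU cV)+
    also have "trace_cfc h (\<lambda>y. 1 - root (Suc n) (upper_cut c y)) = 1 - trace_cfc h (\<lambda>y. root (Suc n) (upper_cut c y))"
      using trace_cfc_diff[OF h continuous_on_const cU] trace_cfc_const[OF h] by simp
    finally show ?thesis .
  qed
  moreover have "(\<lambda>n. 1 - trace_cfc h (\<lambda>y. root (Suc n) (upper_cut c y)) - trace_cfc h (\<lambda>y. root (Suc n) (lower_cut c y)))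
      \<longlonglongrightarrow> deficiency h c"
    unfolding deficiency_def
    by (intro tendsto_intros dim_fn_limit(2)[OF h continuous_on_cuts(1) cut_range(1,2)]
        dim_fn_limit(2)[OF h continuous_on_cuts(2) cut_range(3,4)])
  ultimately show ?thesis by simp
qed

text \<open>Deficiencies are non-negative, as limits of traces of non-negative functions.\<close>
lemma deficiency_nonneg:
  assumes h: "sa h"
  shows "deficiency h c \<ge> 0"
proof (rule LIMSEQ_le_const[OF deficiency_limit[OF h]], intro exI allI impI)
  fix n
  show "0 \<le> trace_cfc h (\<lambda>y. 1 - root (Suc n) (min \<bar>y - c\<bar> 1))"
    by (rule trace_cfc_nonneg[OF h]) (auto intro!: continuous_intros simp: real_root_le_one)
qed

text \<open>The deficiencies of finitely many cut points add up to at most \<open>1\<close>: by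
  \<open>cut_deficit_sum_bound\<close> the sum of the approximating traces is at most \<open>1 + |C|(1 - \<delta>\<^bsup>1/n\<^esup>)\<close>.\<close>
lemma deficiency_sum_le_one:
  assumes h: "sa h" and fin: "finite C"
  shows "(\<Sum>c\<in>C. deficiency h c) \<le> 1"
proof -
  obtain \<delta> where \<delta>: "0 < \<delta>" "\<delta> \<le> 1" "\<And>c c'. c \<in> C \<Longrightarrow> c' \<in> C \<Longrightarrow> c \<noteq> c' \<Longrightarrow> 2 * \<delta> \<le> \<bar>c - c'\<bar>"
    using finite_set_separation[OF fin] by blast
  define W where "W c n y = 1 - root (Suc n) (min \<bar>y - c\<bar> 1)" for c n y
  have cW: "continuous_on (rspec h) (W c n)" for c n unfolding W_def by (intro continuous_intros)
  have le: "(\<Sum>c\<in>C. trace_cfc h (W c n)) \<le> 1 + real (card C) * (1 - root (Suc n) \<delta>)" for n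
  proof -
    have "(\<Sum>c\<in>C. trace_cfc h (W c n)) = trace_cfc h (\<lambda>y. \<Sum>c\<in>C. W c n y)"
      by (rule trace_cfc_sum[OF h fin cW, symmetric])
    also have "\<dots> \<le> trace_cfc h (\<lambda>_. 1 + real (card C) * (1 - root (Suc n) \<delta>))"
      using cut_deficit_sum_bound[OF fin \<delta>] unfolding W_def
      by (intro trace_cfc_mono[OF h _ continuous_on_const] continuous_intros) auto
    also have "\<dots> = 1 + real (card C) * (1 - root (Suc n) \<delta>)" by (rule trace_cfc_const[OF h])
    finally show ?thesis .
  qed
  have l1: "(\<lambda>n. \<Sum>c\<in>C. trace_cfc h (W c n)) \<longlonglongrightarrow> (\<Sum>c\<in>C. deficiency h c)"
    unfolding W_def by (intro tendsto_sum deficiency_limit[OF h])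
  have l2: "(\<lambda>n. 1 + real (card C) * (1 - root (Suc n) \<delta>)) \<longlonglongrightarrow> 1 + real (card C) * (1 - 1)"
    by (intro tendsto_intros LIMSEQ_Suc[OF LIMSEQ_root_const[OF \<delta>(1)]])
  have "(\<Sum>c\<in>C. deficiency h c) \<le> 1 + real (card C) * (1 - 1)"
    by (rule LIMSEQ_le[OF l1 l2]) (use le in auto)
  thus ?thesis by simp
qed

text \<open>Consequently only countably many cut points have positive deficiency: at most \<open>m\<close> of
  them have deficiency \<open>> 1/m\<close>.\<close>
lemma countable_deficient_cuts:
  assumes h: "sa h"
  shows "countable {c. deficiency h c > 0}"
proof -
  define B where "B m = {c. deficiency h c > 1 / real (Suc m)}" for m :: nat
  have finB: "finite (B m)" for m
  proof (rule ccontr)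
    assume "infinite (B m)"
    then obtain C where C: "finite C" "card C = Suc m" "C \<subseteq> B m" using infinite_arbitrarily_large by blast
    have "(\<Sum>c\<in>C. 1 / real (Suc m)) < (\<Sum>c\<in>C. deficiency h c)"
      using C by (intro sum_strict_mono) (auto simp: B_def)
    moreover have "(\<Sum>c\<in>C. 1 / real (Suc m)) = 1" using C by simp
    ultimately show False using deficiency_sum_le_one[OF h C(1)] by simp
  qed
  have "{c. deficiency h c > 0} \<subseteq> (\<Union>m. B m)"
  proof
    fix c assume c: "c \<in> {c. deficiency h c > 0}"
    then obtain m where "inverse (real (Suc m)) < deficiency h c" using reals_Archimedean by auto
    thus "c \<in> (\<Union>m. B m)" unfolding B_def by (auto simp: inverse_eq_divide)
  qed
  moreover have "countable (\<Union>m. B m)" using finB by (intro countable_UN) (auto intro: countable_finite)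
  ultimately show ?thesis using countable_subset by blast
qed

text \<open>Since an interval is uncountable, every interval \<open>(s, t)\<close> contains a cut point without
  deficiency.\<close>
lemma exists_cut_without_deficiency:
  assumes h: "sa h" and st: "s < t"
  obtains c where "s < c" "c < t" "deficiency h c = 0"
proof -
  have "\<not> {s<..<t} \<subseteq> {c. deficiency h c > 0}"
    using countable_deficient_cuts[OF h] countable_subset uncountable_open_interval[of s t] st by auto
  then obtain c where "c \<in> {s<..<t}" "\<not> deficiency h c > 0" by blast
  thus ?thesis using that deficiency_nonneg[OF h, of c] by auto
qed

text \<open>A cut point without deficiency strictly between two spectral points yields the theorem:
  \<open>e = a\<^sub>c(h)\<close> and \<open>f = b\<^sub>c(h)\<close> are positive and orthogonal, with \<open>d\<^sub>\<tau>(e) + d\<^sub>\<tau>(f) = 1\<close> and both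
  dimensions positive because \<open>a\<^sub>c(t) > 0\<close> and \<open>b\<^sub>c(s) > 0\<close>.\<close>
lemma orthogonal_pair_of_cut:
  assumes h: "sa h" and s: "s \<in> rspec h" and t: "t \<in> rspec h" and c: "s < c" "c < t"
    and D: "deficiency h c = 0"
  shows "\<exists>l e f. 0 < l \<and> l < 1 \<and> cpositive st sc e \<and> cpositive st sc f \<and> e * f = 0
           \<and> dtau_eq st sc \<tau> e l \<and> dtau_eq st sc \<tau> f (1 - l)"
proof -
  note cuts = continuous_on_cuts[of "rspec h" c]
  have l_pos: "dim_fn h (upper_cut c) > 0"
    by (rule dim_fn_pos[OF h cuts(1) cut_range(1,2) t]) (use c in \<open>simp add: upper_cut_def\<close>)
  have "dim_fn h (lower_cut c) > 0"
    by (rule dim_fn_pos[OF h cuts(2) cut_range(3,4) s]) (use c in \<open>simp add: lower_cut_def\<close>)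
  moreover have dim_lower: "dim_fn h (lower_cut c) = 1 - dim_fn h (upper_cut c)"
    using D unfolding deficiency_def by simp
  ultimately have l_lt: "dim_fn h (upper_cut c) < 1" by simp
  have "cfc h (upper_cut c) * cfc h (lower_cut c) = cfc h (\<lambda>y. upper_cut c y * lower_cut c y)"
    by (rule cfc_mult[OF h cuts, symmetric])
  also have "\<dots> = 0" using cfc_zero[OF h] by (simp add: cut_orthogonal)
  finally have "cfc h (upper_cut c) * cfc h (lower_cut c) = 0" .
  moreover have "cpositive st sc (cfc h (upper_cut c))" "cpositive st sc (cfc h (lower_cut c))"
    using cfc_pos[OF h cuts(1)] cfc_pos[OF h cuts(2)] cut_range by auto
  moreover have "dtau_eq st sc \<tau> (cfc h (upper_cut c)) (dim_fn h (upper_cut c))"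
    "dtau_eq st sc \<tau> (cfc h (lower_cut c)) (1 - dim_fn h (upper_cut c))"
    using dtau_cfc[OF h cuts(1) cut_range(1,2)] dtau_cfc[OF h cuts(2) cut_range(3,4)] dim_lower by auto
  ultimately show ?thesis using l_pos l_lt by blast
qed

end


section \<open>Non-scalar self-adjoint elements\<close>

context cstar begin

text \<open>If \<open>x\<close> is not a scalar, one of its real and imaginary parts is a non-scalar self-adjoint
  element.\<close>
lemma exists_nonscalar_sa:
  assumes "x \<notin> range (\<lambda>c. sc c 1)"
  shows "\<exists>h. sa h \<and> h \<notin> range (\<lambda>c. sc c 1)"
proof (rule ccontr)
  assume H: "\<not> ?thesis"
  define h1 where "h1 = (1/2) *\<^sub>R (x + st x)"
  define h2 where "h2 = sc (- \<i> / 2) (x - st x)"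
  have s1: "sa h1" unfolding sa_def h1_def by (simp add: st_scaleR st_add add.commute)
  have s2: "sa h2"
  proof -
    have "st h2 = sc (\<i> / 2) (st x - x)" unfolding h2_def by (simp add: st_sc st_diff)
    also have "\<dots> = sc (\<i> / 2) (- (x - st x))" by simp
    also have "\<dots> = sc (- (\<i> / 2)) (x - st x)" by (simp only: sc_minusr sc_minusl)
    finally show ?thesis unfolding sa_def h2_def by simp
  qed
  obtain a where a: "h1 = sc a 1" using H s1 by blast
  obtain b where b: "h2 = sc b 1" using H s2 by blast
  have half: "sc (1/2) y = (1/2) *\<^sub>R y" for y using sc_real[of "1/2" y] by simp
  have "sc \<i> h2 = sc (1/2) (x - st x)" unfolding h2_def by (simp add: sc_assoc)
  hence e2: "sc \<i> h2 = (1/2) *\<^sub>R x - (1/2) *\<^sub>R st x" unfolding half by (simp add: scaleR_diff_right)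
  have "h1 + sc \<i> h2 = (1/2) *\<^sub>R x + (1/2) *\<^sub>R x" unfolding h1_def e2 by (simp add: scaleR_add_right)
  also have "\<dots> = x" by (simp add: scaleR_add_left[symmetric])
  finally have "h1 + sc \<i> h2 = x" .
  hence "x = sc (a + \<i> * b) 1" unfolding a b by (simp add: sc_assoc sc_addl)
  thus False using assms by blast
qed


text \<open>A non-scalar self-adjoint element has two distinct spectral points: if its spectrum were
  \<open>{s}\<close>, the norm estimate applied to \<open>p(y) = y - s\<close> would give \<open>h = s\<close>.\<close>
lemma sa_nonscalar_two_spectral_points:
  assumes h: "sa h" "h \<notin> range (\<lambda>c. sc c 1)"
  obtains s t where "s \<in> rspec h" "t \<in> rspec h" "s < t"
proof -
  obtain s where s: "s \<in> rspec h" using rspec_nonempty[OF h(1)] by blast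
  have "\<exists>t\<in>rspec h. t \<noteq> s"
  proof (rule ccontr)
    assume "\<not> (\<exists>t\<in>rspec h. t \<noteq> s)"
    hence "norm (rpoly_at [:-s, 1:] h) \<le> 0" by (intro rpoly_norm_le[OF h(1)]) auto
    moreover have "rpoly_at [:-s, 1:] h = h - of_real s"
      using rpoly_at_pCons[of "-s" "[:1:]" h] rpoly_at_const[of 1 h] by simp
    ultimately have "h = sc (complex_of_real s) 1" by (simp add: sc_of_real)
    thus False using h(2) by blast
  qed
  then obtain t where t: "t \<in> rspec h" "t \<noteq> s" by blast
  show ?thesis
  proof (cases "s < t")
    case True thus ?thesis using that s t by blast
  next
    case False thus ?thesis using that[of t s] s t by simp
  qed
qed

end


theorem lemma6p3:
  fixes st :: "'a::{real_normed_algebra_1,banach} \<Rightarrow> 'a"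
    and sc :: "complex \<Rightarrow> 'a \<Rightarrow> 'a"
    and \<tau> :: "'a \<Rightarrow> complex"
  assumes "unital_cstar_algebra st sc"
    and "\<exists>x. x \<notin> range (\<lambda>c. sc c 1)"
    and "tracial_state st sc \<tau>"
    and "faithful st \<tau>"
  shows "\<exists>l e f. 0 < l \<and> l < 1 \<and> cpositive st sc e \<and> cpositive st sc f \<and> e * f = 0
           \<and> dtau_eq st sc \<tau> e l \<and> dtau_eq st sc \<tau> f (1 - l)"
proof -
  interpret C: cstar_trace st sc \<tau>
    by (intro cstar_trace.intro cstar.intro cstar_trace_axioms.intro) (use assms in auto)
  obtain x where "x \<notin> range (\<lambda>c. sc c 1)" using assms(2) by blast
  then obtain h where h: "C.sa h" "h \<notin> range (\<lambda>c. sc c 1)" using C.exists_nonscalar_sa by blast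
  then obtain s t where s: "s \<in> C.rspec h" and t: "t \<in> C.rspec h" and "s < t"
    by (rule C.sa_nonscalar_two_spectral_points)
  then obtain c where "s < c" "c < t" "C.deficiency h c = 0"
    using C.exists_cut_without_deficiency[OF h(1)] by blast
  thus ?thesis using C.orthogonal_pair_of_cut[OF h(1) s t] by blast
qed

end
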